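(* If $X=(X_1,\dots,X_d)$ is a $d$-dimensional $1$-Meixner random vector, then its Laplace transform $\varphi(\mathbf t)=E[\exp(\mathbf t\cdot X)]$ is well defined (finite) and twice differentiable with continuous second order partial derivatives on some neighborhood $V$ of $\mathbf 0\in\mathbb R^d$.
   Context: Let $X_1,\dots,X_d$ be real random variables on $(\Omega,\mathcal F,P)$ with finite moments of all orders. $F$ is the space of polynomial random variables $f(X_1,\dots,X_d)$ (complex coefficients), $F_n$ those of degree $\le n$, $G_0=F_0$, $G_n=F_n\ominus F_{n-1}$ in $L^2(P)$. For $f\in G_n$, $X_if\in G_{n-1}\oplus G_n\oplus G_{n+1}$; its components define $a^-(i)f,a^0(i)f,a^+(i)f$ respectively, extended linearly to $F$. $U_i:=a^-(i)+\tfrac12a^0(i)$. $(X_1,\dots,X_d)$ is a $d$-dimensional $1$-Meixner random vector if there are reals $\alpha_{i,j,k},\beta_{i,j}$ with $[U_i,X_j]=\sum_k\alpha_{i,j,k}X_k+\beta_{i,j}I$ on $F$ for all $i,j$ (with $X_j$ the multiplication operator, $I$ the identity). $\mathbf t\cdot X=\sum_it_iX_i$. *)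

theory Defs
  imports "HOL-Analysis.Analysis" "HOL-Probability.Probability"
begin

definition monomialRV :: "('d::finite \<Rightarrow> 'a \<Rightarrow> real) \<Rightarrow> ('d \<Rightarrow> nat) \<Rightarrow> 'a \<Rightarrow> real" where
  "monomialRV X k = (\<lambda>\<omega>. \<Prod>i\<in>UNIV. X i \<omega> ^ k i)"

definition polyRV_deg :: "('d::finite \<Rightarrow> 'a \<Rightarrow> real) \<Rightarrow> nat \<Rightarrow> ('a \<Rightarrow> complex) set" where
  "polyRV_deg X n = {f. \<exists>K c. finite K \<and> (\<forall>k\<in>K. (\<Sum>i\<in>UNIV. k i) \<le> n) \<and>
       f = (\<lambda>\<omega>. \<Sum>k\<in>K. c k * complex_of_real (monomialRV X k \<omega>))}"

definition polyRV :: "('d::finite \<Rightarrow> 'a \<Rightarrow> real) \<Rightarrow> ('a \<Rightarrow> complex) set" where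
  "polyRV X = (\<Union>n. polyRV_deg X n)"

definition L2inner :: "'a measure \<Rightarrow> ('a \<Rightarrow> complex) \<Rightarrow> ('a \<Rightarrow> complex) \<Rightarrow> complex" where
  "L2inner M f g = integral\<^sup>L M (\<lambda>\<omega>. f \<omega> * cnj (g \<omega>))"

text \<open>Orthogonal projection in L^2(P) onto a (finite-dimensional) subspace S of functions;
  determined up to P-a.e. equality.\<close>
definition L2proj :: "'a measure \<Rightarrow> ('a \<Rightarrow> complex) set \<Rightarrow> ('a \<Rightarrow> complex) \<Rightarrow> 'a \<Rightarrow> complex" where
  "L2proj M S h = (SOME p. p \<in> S \<and> (\<forall>g\<in>S. L2inner M (\<lambda>\<omega>. h \<omega> - p \<omega>) g = 0))"

text \<open>Component of h in G_n = F_n \<ominus> F_{n-1} (with F_{-1} = 0).\<close>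
fun Gcomp :: "'a measure \<Rightarrow> ('d::finite \<Rightarrow> 'a \<Rightarrow> real) \<Rightarrow> nat \<Rightarrow> ('a \<Rightarrow> complex) \<Rightarrow> 'a \<Rightarrow> complex" where
  "Gcomp M X 0 h = L2proj M (polyRV_deg X 0) h"
| "Gcomp M X (Suc n) h =
     (\<lambda>\<omega>. L2proj M (polyRV_deg X (Suc n)) h \<omega> - L2proj M (polyRV_deg X n) h \<omega>)"

definition mulX :: "('d::finite \<Rightarrow> 'a \<Rightarrow> real) \<Rightarrow> 'd \<Rightarrow> ('a \<Rightarrow> complex) \<Rightarrow> 'a \<Rightarrow> complex" where
  "mulX X i f = (\<lambda>\<omega>. complex_of_real (X i \<omega>) * f \<omega>)"

text \<open>Annihilation a^-(i) and preservation a^0(i) operators, extended linearly to F: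
  for g in G_n, a^-(i) g is the G_{n-1} component and a^0(i) g the G_n component of X_i g.\<close>
definition degRV :: "('d::finite \<Rightarrow> 'a \<Rightarrow> real) \<Rightarrow> ('a \<Rightarrow> complex) \<Rightarrow> nat" where
  "degRV X f = (LEAST n. f \<in> polyRV_deg X n)"

definition annihOp :: "'a measure \<Rightarrow> ('d::finite \<Rightarrow> 'a \<Rightarrow> real) \<Rightarrow> 'd \<Rightarrow> ('a \<Rightarrow> complex) \<Rightarrow> 'a \<Rightarrow> complex" where
  "annihOp M X i f = (\<lambda>\<omega>. \<Sum>n\<in>{1..degRV X f}.
      Gcomp M X (n - 1) (mulX X i (Gcomp M X n f)) \<omega>)"

definition preservOp :: "'a measure \<Rightarrow> ('d::finite \<Rightarrow> 'a \<Rightarrow> real) \<Rightarrow> 'd \<Rightarrow> ('a \<Rightarrow> complex) \<Rightarrow> 'a \<Rightarrow> complex" where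
  "preservOp M X i f = (\<lambda>\<omega>. \<Sum>n\<in>{0..degRV X f}.
      Gcomp M X n (mulX X i (Gcomp M X n f)) \<omega>)"

definition Uop :: "'a measure \<Rightarrow> ('d::finite \<Rightarrow> 'a \<Rightarrow> real) \<Rightarrow> 'd \<Rightarrow> ('a \<Rightarrow> complex) \<Rightarrow> 'a \<Rightarrow> complex" where
  "Uop M X i f = (\<lambda>\<omega>. annihOp M X i f \<omega> + (1/2) * preservOp M X i f \<omega>)"

definition finite_moments :: "'a measure \<Rightarrow> ('d::finite \<Rightarrow> 'a \<Rightarrow> real) \<Rightarrow> bool" where
  "finite_moments M X \<longleftrightarrow> (\<forall>i. X i \<in> borel_measurable M \<and>
      (\<forall>n::nat. integrable M (\<lambda>\<omega>. \<bar>X i \<omega>\<bar> ^ n)))"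

text \<open>d-dimensional 1-Meixner random vector: [U_i, X_j] = \<Sum>_k \<alpha>_{ijk} X_k + \<beta>_{ij} I on F
  (equalities of random variables, i.e. P-a.e.).\<close>
definition one_Meixner :: "'a measure \<Rightarrow> ('d::finite \<Rightarrow> 'a \<Rightarrow> real) \<Rightarrow> bool" where
  "one_Meixner M X \<longleftrightarrow> finite_moments M X \<and>
     (\<exists>(\<alpha>::'d \<Rightarrow> 'd \<Rightarrow> 'd \<Rightarrow> real) (\<beta>::'d \<Rightarrow> 'd \<Rightarrow> real). \<forall>i j. \<forall>f\<in>polyRV X.
        AE \<omega> in M. Uop M X i (mulX X j f) \<omega> - complex_of_real (X j \<omega>) * Uop M X i f \<omega>
          = (\<Sum>k\<in>UNIV. complex_of_real (\<alpha> i j k) * complex_of_real (X k \<omega>) * f \<omega>)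
            + complex_of_real (\<beta> i j) * f \<omega>)"

definition laplaceRV :: "'a measure \<Rightarrow> ('d::finite \<Rightarrow> 'a \<Rightarrow> real) \<Rightarrow> real^'d \<Rightarrow> real" where
  "laplaceRV M X t = integral\<^sup>L M (\<lambda>\<omega>. exp (\<Sum>i\<in>UNIV. t $ i * X i \<omega>))"

definition partialD :: "'d::finite \<Rightarrow> (real^'d \<Rightarrow> real) \<Rightarrow> real^'d \<Rightarrow> real" where
  "partialD i f t = deriv (\<lambda>s. f (t + s *\<^sub>R axis i 1)) 0"

definition has_partial_at :: "'d::finite \<Rightarrow> (real^'d \<Rightarrow> real) \<Rightarrow> real^'d \<Rightarrow> bool" where
  "has_partial_at i f t \<longleftrightarrow> (\<lambda>s. f (t + s *\<^sub>R axis i 1)) differentiable (at 0)"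

end

(*
  Taking expectations in the commutation relation [U_i, X_i] = L_i, applied to X_i^n, gives the
  Stein-type recursion  E X_i^(n+1) = E X_i * E X_i^n + n * E (L_i X_i^(n-1))  with L_i affine in X:
  only the G_0 and G_1 components of a polynomial contribute to the mean of U_i p, so that
  E (U_i p) = E (X_i p) - E X_i * E p / 2.  Summing over i and eliminating the odd moments by
  AM-GM, the even absolute moments satisfy s(2q+2) <= K (q+1)^2 s(2q), hence s(2q) <= d K^q (q!)^2.
  Since (q!)^2 <= (2q)!, the series of cosh converges in L^1, so E exp (tau * sum_i |X_i|) is finite
  for some tau > 0.  On the ball of radius tau/4 this exponential moment dominates
  polynomial * exp (t . X); the Laplace transform is then differentiated twice under the integral
  sign, and its second partial derivatives are Lipschitz there.
*)

theory Submission
  imports Defs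
begin

lemma abs_exp_minus_one_minus_le:
  fixes x :: real
  shows "\<bar>exp x - 1 - x\<bar> \<le> x\<^sup>2 * exp \<bar>x\<bar>"
proof -
  obtain t where t: "\<bar>t\<bar> \<le> \<bar>x\<bar>" "exp x = (\<Sum>m<2. x ^ m / fact m) + exp t / fact 2 * x\<^sup>2"
    using Maclaurin_exp_le[of x 2] by blast
  then have "\<bar>exp x - 1 - x\<bar> = exp t / 2 * x\<^sup>2"
    by (simp add: numeral_2_eq_2)
  also have "\<dots> \<le> exp \<bar>x\<bar> * x\<^sup>2"
  proof (intro mult_right_mono)
    have "exp t \<le> exp \<bar>x\<bar>"
      using t(1) by simp
    then show "exp t / 2 \<le> exp \<bar>x\<bar>"
      using exp_gt_zero[of t] by linarith
  qed simp
  finally show ?thesis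
    by (simp add: mult.commute)
qed

lemma abs_exp_diff_le:
  fixes a b :: real
  shows "\<bar>exp a - exp b\<bar> \<le> \<bar>a - b\<bar> * (exp a + exp b)"
proof -
  have le: "\<bar>exp a - exp b\<bar> \<le> \<bar>a - b\<bar> * (exp a + exp b)" if "b \<le> a" for a b :: real
  proof -
    have "exp a * (1 + (b - a)) \<le> exp a * exp (b - a)"
      using exp_ge_add_one_self[of "b - a"] by (intro mult_left_mono) auto
    then have "\<bar>exp a - exp b\<bar> \<le> (a - b) * exp a"
      using that by (simp add: exp_diff algebra_simps)
    also have "\<dots> \<le> \<bar>a - b\<bar> * (exp a + exp b)"
      using that by (intro mult_mono) auto
    finally show ?thesis .
  qed
  show ?thesis
    using le[of b a] le[of a b] by (cases "b \<le> a") (auto simp: abs_minus_commute add.commute)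
qed

lemma one_plus_power_le:
  fixes x :: real
  assumes "0 \<le> x"
  shows "(1 + x) ^ N \<le> 2 ^ N * (1 + x ^ N)"
proof -
  have "(1 + x) ^ N \<le> (2 * max 1 x) ^ N"
    using assms by (intro power_mono) auto
  also have "\<dots> \<le> 2 ^ N * (1 + x ^ N)"
    using assms by (auto simp: power_mult_distrib max_def)
  finally show ?thesis .
qed

lemma mult_power_le_power_Suc_add:
  fixes a b :: real
  assumes "0 \<le> a" "0 \<le> b"
  shows "b * a ^ n \<le> b ^ Suc n + a ^ Suc n"
proof (cases "a \<le> b")
  case True
  then have "b * a ^ n \<le> b * b ^ n"
    using assms by (intro mult_left_mono power_mono) auto
  then show ?thesis
    using assms by (simp add: add_increasing2)
next
  case False
  then have "b * a ^ n \<le> a * a ^ n"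
    using assms by (intro mult_right_mono) auto
  then show ?thesis
    using assms by (simp add: add_increasing)
qed

lemma two_mult_power_Suc_le:
  fixes a c :: real
  assumes "0 \<le> a"
  shows "2 * c * a ^ Suc n \<le> a ^ Suc (Suc n) + c\<^sup>2 * a ^ n"
proof -
  have "0 \<le> a ^ n * (a - c)\<^sup>2"
    using assms by simp
  then show ?thesis
    by (simp add: power2_eq_square algebra_simps)
qed

lemma sum_mult_sum_power_le:
  fixes a :: "'i \<Rightarrow> real"
  assumes "finite I" "\<And>i. i \<in> I \<Longrightarrow> 0 \<le> a i"
  shows "(\<Sum>k\<in>I. a k) * (\<Sum>i\<in>I. a i ^ n) \<le> 2 * real (card I) * (\<Sum>i\<in>I. a i ^ Suc n)"
proof -
  have "(\<Sum>k\<in>I. a k) * (\<Sum>i\<in>I. a i ^ n) = (\<Sum>k\<in>I. \<Sum>i\<in>I. a k * a i ^ n)"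
    by (simp add: sum_product)
  also have "\<dots> \<le> (\<Sum>k\<in>I. \<Sum>i\<in>I. a k ^ Suc n + a i ^ Suc n)"
    using assms(2) by (intro sum_mono mult_power_le_power_Suc_add) auto
  also have "\<dots> = real (card I) * (\<Sum>i\<in>I. a i ^ Suc n) + real (card I) * (\<Sum>i\<in>I. a i ^ Suc n)"
    by (simp only: sum.distrib sum_constant) (simp add: sum_distrib_left[symmetric] mult.commute)
  also have "\<dots> = 2 * real (card I) * (\<Sum>i\<in>I. a i ^ Suc n)"
    by simp
  finally show ?thesis .
qed

lemma sum_abs_power_growth_le:
  fixes x :: "'d::finite \<Rightarrow> real"
  assumes "0 \<le> c"
  shows "(\<Sum>i\<in>UNIV. c * \<bar>x i\<bar> ^ Suc n + real (Suc n) * (c * (1 + (\<Sum>k\<in>UNIV. \<bar>x k\<bar>)) * \<bar>x i\<bar> ^ n))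
    \<le> real (Suc n) * (1 + 2 * real CARD('d)) * c * ((\<Sum>i\<in>UNIV. \<bar>x i\<bar> ^ n) + (\<Sum>i\<in>UNIV. \<bar>x i\<bar> ^ Suc n))"
proof -
  let ?d = "real CARD('d)" and ?S = "\<Sum>k\<in>UNIV. \<bar>x k\<bar>"
  let ?T = "\<Sum>i\<in>UNIV. \<bar>x i\<bar> ^ n" and ?T' = "\<Sum>i\<in>UNIV. \<bar>x i\<bar> ^ Suc n"
  have "(\<Sum>i\<in>UNIV. c * \<bar>x i\<bar> ^ Suc n + real (Suc n) * (c * (1 + ?S) * \<bar>x i\<bar> ^ n))
      = c * ?T' + real (Suc n) * c * ((1 + ?S) * ?T)"
    by (simp add: sum.distrib sum_distrib_left mult.assoc del: power_Suc of_nat_Suc)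
  also have "\<dots> = c * ?T' + real (Suc n) * c * (?T + ?S * ?T)"
    by (simp add: distrib_right)
  also have "\<dots> \<le> c * ?T' + real (Suc n) * c * (?T + 2 * ?d * ?T')"
    using assms sum_mult_sum_power_le[of UNIV "\<lambda>i. \<bar>x i\<bar>" n] by (simp add: mult_left_mono)
  also have "\<dots> = real (Suc n) * (1 + 2 * ?d) * c * (?T + ?T')
      - (real (Suc n) * c * ?T * (2 * ?d) + c * ?T' * real n)"
    by (simp add: algebra_simps)
  also have "\<dots> \<le> real (Suc n) * (1 + 2 * ?d) * c * (?T + ?T')"
  proof -
    have "0 \<le> real (Suc n) * c * ?T * (2 * ?d) + c * ?T' * real n"
      using assms by (intro add_nonneg_nonneg mult_nonneg_nonneg) (auto simp: sum_nonneg)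
    then show ?thesis
      by linarith
  qed
  finally show ?thesis .
qed

lemma mono_sum_le_sum_mono:
  fixes a :: "'d::finite \<Rightarrow> real" and g :: "real \<Rightarrow> real"
  assumes "mono g" "\<And>x. 0 \<le> g x"
  shows "g (\<Sum>i\<in>UNIV. a i) \<le> (\<Sum>i\<in>UNIV. g (real CARD('d) * a i))"
proof -
  have "Max (range a) \<in> range a"
    by (intro Max_in) auto
  then obtain j where j: "Max (range a) = a j"
    by blast
  have "(\<Sum>i\<in>UNIV. a i) \<le> real CARD('d) * a j"
    using sum_bounded_above[of UNIV a "a j"] j Max_ge[of "range a"] by auto
  then have "g (\<Sum>i\<in>UNIV. a i) \<le> g (real CARD('d) * a j)"
    using assms(1) by (simp add: monoD)
  also have "\<dots> \<le> (\<Sum>i\<in>UNIV. g (real CARD('d) * a i))"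
    using assms(2) by (intro member_le_sum) auto
  finally show ?thesis .
qed

lemma cosh_sums_even_powers:
  fixes x :: real
  shows "(\<lambda>q. x ^ (2 * q) / fact (2 * q)) sums cosh x"
proof -
  have "(\<lambda>q. (\<lambda>n. if even n then x ^ n /\<^sub>R fact n else 0) (2 * q)) sums cosh x"
    using cosh_converges[of x]
    by (subst sums_mono_reindex) (auto simp: strict_mono_def elim!: oddE)
  then show ?thesis
    by (simp add: divide_inverse mult.commute)
qed

lemma integrable_dominated:
  fixes f :: "'a \<Rightarrow> 'b::{banach, second_countable_topology}"
  assumes "integrable M H" "f \<in> borel_measurable M" "\<And>\<omega>. norm (f \<omega>) \<le> H \<omega>"
  shows "integrable M f"
  using assms(1,2)
proof (rule Bochner_Integration.integrable_bound)
  show "AE \<omega> in M. norm (f \<omega>) \<le> norm (H \<omega>)"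
    using assms(3) by (intro AE_I2) (auto intro: order_trans[OF _ abs_ge_self])
qed

lemma norm_integral_le_dominating:
  fixes f :: "'a \<Rightarrow> 'b::{banach, second_countable_topology}"
  assumes "integrable M H" "f \<in> borel_measurable M" "\<And>\<omega>. norm (f \<omega>) \<le> H \<omega>"
  shows "norm (integral\<^sup>L M f) \<le> integral\<^sup>L M H"
proof -
  have "integrable M f"
    using assms by (rule integrable_dominated)
  have "norm (integral\<^sup>L M f) \<le> integral\<^sup>L M (\<lambda>\<omega>. norm (f \<omega>))"
    by (rule integral_norm_bound)
  also have "\<dots> \<le> integral\<^sup>L M H"
    using \<open>integrable M f\<close> assms(1,3) by (intro integral_mono) auto
  finally show ?thesis .
qed

lemma has_real_derivative_if_quadratic_remainder:
  fixes \<psi> :: "real \<Rightarrow> real"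
  assumes "0 < \<delta>" "\<And>s. \<bar>s\<bar> \<le> \<delta> \<Longrightarrow> \<bar>\<psi> s - \<psi> 0 - s * D\<bar> \<le> C * s\<^sup>2"
  shows "(\<psi> has_real_derivative D) (at 0)"
proof -
  have "((\<lambda>s. (\<psi> s - \<psi> 0) / (s - 0) - D) \<longlongrightarrow> 0) (at 0)"
  proof (rule Lim_null_comparison)
    have "\<forall>\<^sub>F s in at (0::real). \<bar>s\<bar> \<le> \<delta> \<and> s \<noteq> 0"
      unfolding eventually_at using assms(1) by (intro exI[of _ \<delta>]) (auto simp: dist_real_def)
    then show "\<forall>\<^sub>F s in at 0. norm ((\<psi> s - \<psi> 0) / (s - 0) - D) \<le> C * \<bar>s\<bar>"
    proof (rule eventually_mono)
      fix s :: real
      assume s: "\<bar>s\<bar> \<le> \<delta> \<and> s \<noteq> 0"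
      have "norm ((\<psi> s - \<psi> 0) / (s - 0) - D) = \<bar>\<psi> s - \<psi> 0 - s * D\<bar> / \<bar>s\<bar>"
        using s by (simp add: field_simps)
      also have "\<dots> \<le> C * s\<^sup>2 / \<bar>s\<bar>"
        using assms(2) s by (intro divide_right_mono) auto
      also have "\<dots> = C * \<bar>s\<bar>"
        using s by (cases "0 \<le> s") (simp_all add: power2_eq_square)
      finally show "norm ((\<psi> s - \<psi> 0) / (s - 0) - D) \<le> C * \<bar>s\<bar>" .
    qed
    show "((\<lambda>s. C * \<bar>s\<bar>) \<longlongrightarrow> 0) (at (0::real))"
      by (auto intro!: tendsto_eq_intros)
  qed
  then show ?thesis
    by (simp add: has_field_derivative_iff LIM_zero_iff)
qed

lemma exp_perturbation_le:
  fixes y z s \<delta> :: real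
  assumes "0 \<le> \<delta>" "\<bar>s\<bar> \<le> \<delta>"
  shows "exp (z + s * y) \<le> (1 + \<bar>y\<bar>)\<^sup>2 * exp (z + \<delta> * \<bar>y\<bar>)"
    and "\<bar>y\<bar> * exp z \<le> (1 + \<bar>y\<bar>)\<^sup>2 * exp (z + \<delta> * \<bar>y\<bar>)"
    and "\<bar>exp z * (exp (s * y) - 1 - s * y)\<bar> \<le> s\<^sup>2 * ((1 + \<bar>y\<bar>)\<^sup>2 * exp (z + \<delta> * \<bar>y\<bar>))"
proof -
  have y_le: "1 \<le> (1 + \<bar>y\<bar>)\<^sup>2" "\<bar>y\<bar> \<le> (1 + \<bar>y\<bar>)\<^sup>2" "y\<^sup>2 \<le> (1 + \<bar>y\<bar>)\<^sup>2"
    using power_mono[of "\<bar>y\<bar>" "1 + \<bar>y\<bar>" 2] by (auto simp: power2_eq_square algebra_simps)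
  have exp_le: "exp (z + u * y) \<le> exp (z + \<delta> * \<bar>y\<bar>)" if "\<bar>u\<bar> \<le> \<delta>" for u
    using abs_ge_self[of "u * y"] mult_right_mono[OF that abs_ge_zero[of y]] by (simp add: abs_mult)
  show "exp (z + s * y) \<le> (1 + \<bar>y\<bar>)\<^sup>2 * exp (z + \<delta> * \<bar>y\<bar>)"
    using mult_mono[OF y_le(1) exp_le[OF assms(2)]] by simp
  show "\<bar>y\<bar> * exp z \<le> (1 + \<bar>y\<bar>)\<^sup>2 * exp (z + \<delta> * \<bar>y\<bar>)"
    using mult_mono[OF y_le(2) exp_le[of 0]] assms(1) by simp
  have "\<bar>exp (s * y) - 1 - s * y\<bar> \<le> s\<^sup>2 * (y\<^sup>2 * exp \<bar>s * y\<bar>)"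
    using abs_exp_minus_one_minus_le[of "s * y"] by (simp add: power_mult_distrib mult.assoc)
  also have "\<dots> \<le> s\<^sup>2 * ((1 + \<bar>y\<bar>)\<^sup>2 * exp (\<delta> * \<bar>y\<bar>))"
    using y_le(3) mult_right_mono[OF assms(2) abs_ge_zero[of y]]
    by (intro mult_left_mono mult_mono) (auto simp: abs_mult)
  finally show "\<bar>exp z * (exp (s * y) - 1 - s * y)\<bar> \<le> s\<^sup>2 * ((1 + \<bar>y\<bar>)\<^sup>2 * exp (z + \<delta> * \<bar>y\<bar>))"
    by (simp add: abs_mult exp_add mult_ac)
qed

text \<open>Differentiation under the integral sign: by \<open>exp_perturbation_le\<close> the domination
  hypothesis bounds the first-order remainder of the integral by \<open>s\<^sup>2 \<integral>H\<close>.\<close>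
lemma has_real_derivative_integral_exp:
  fixes g Y Z H :: "'a \<Rightarrow> real"
  assumes "0 < \<delta>"
    and [measurable]: "g \<in> borel_measurable M" "Y \<in> borel_measurable M" "Z \<in> borel_measurable M"
    and H: "integrable M H" "\<And>\<omega>. \<bar>g \<omega>\<bar> * (1 + \<bar>Y \<omega>\<bar>)\<^sup>2 * exp (Z \<omega> + \<delta> * \<bar>Y \<omega>\<bar>) \<le> H \<omega>"
  shows "((\<lambda>s. \<integral>\<omega>. g \<omega> * exp (Z \<omega> + s * Y \<omega>) \<partial>M) has_real_derivative
            (\<integral>\<omega>. g \<omega> * Y \<omega> * exp (Z \<omega>) \<partial>M)) (at 0)"
proof (rule has_real_derivative_if_quadratic_remainder[OF assms(1)])
  fix s :: real
  assume s: "\<bar>s\<bar> \<le> \<delta>"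
  have dominated: "\<bar>g \<omega>\<bar> * a \<le> H \<omega>" if "a \<le> (1 + \<bar>Y \<omega>\<bar>)\<^sup>2 * exp (Z \<omega> + \<delta> * \<bar>Y \<omega>\<bar>)" for a \<omega>
    using mult_left_mono[OF that abs_ge_zero[of "g \<omega>"]] H(2)[of \<omega>] by (simp add: mult.assoc)
  have int_exp: "integrable M (\<lambda>\<omega>. g \<omega> * exp (Z \<omega> + u * Y \<omega>))" if "\<bar>u\<bar> \<le> \<delta>" for u
    using dominated[OF exp_perturbation_le(1)[OF _ that]] assms(1)
    by (intro integrable_dominated[OF H(1)]) (auto simp: abs_mult)
  have int_deriv: "integrable M (\<lambda>\<omega>. g \<omega> * Y \<omega> * exp (Z \<omega>))"
    using dominated[OF exp_perturbation_le(2)[OF _ s]] assms(1)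
    by (intro integrable_dominated[OF H(1)]) (auto simp: abs_mult mult.assoc)
  have remainder: "\<bar>g \<omega> * exp (Z \<omega>) * (exp (s * Y \<omega>) - 1 - s * Y \<omega>)\<bar> \<le> s\<^sup>2 * H \<omega>" for \<omega>
  proof -
    have "\<bar>g \<omega> * exp (Z \<omega>) * (exp (s * Y \<omega>) - 1 - s * Y \<omega>)\<bar>
        = \<bar>g \<omega>\<bar> * \<bar>exp (Z \<omega>) * (exp (s * Y \<omega>) - 1 - s * Y \<omega>)\<bar>"
      by (simp add: abs_mult mult.assoc)
    also have "\<dots> \<le> \<bar>g \<omega>\<bar> * (s\<^sup>2 * ((1 + \<bar>Y \<omega>\<bar>)\<^sup>2 * exp (Z \<omega> + \<delta> * \<bar>Y \<omega>\<bar>)))"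
      using assms(1) s by (intro mult_left_mono exp_perturbation_le(3)) auto
    also have "\<dots> \<le> s\<^sup>2 * H \<omega>"
      using mult_left_mono[OF H(2)[of \<omega>], of "s\<^sup>2"] by (simp add: mult_ac)
    finally show ?thesis .
  qed
  have "(\<integral>\<omega>. g \<omega> * exp (Z \<omega> + s * Y \<omega>) \<partial>M) - (\<integral>\<omega>. g \<omega> * exp (Z \<omega> + 0 * Y \<omega>) \<partial>M)
      - s * (\<integral>\<omega>. g \<omega> * Y \<omega> * exp (Z \<omega>) \<partial>M)
      = (\<integral>\<omega>. g \<omega> * exp (Z \<omega>) * (exp (s * Y \<omega>) - 1 - s * Y \<omega>) \<partial>M)"
    using int_exp[OF s] int_exp[of 0] int_deriv assms(1)
    by (simp add: exp_add algebra_simps)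
  also have "\<bar>\<dots>\<bar> \<le> (\<integral>\<omega>. s\<^sup>2 * H \<omega> \<partial>M)"
  proof (rule norm_integral_le_dominating[where 'b=real, unfolded real_norm_def])
    show "integrable M (\<lambda>\<omega>. s\<^sup>2 * H \<omega>)"
      using H(1) by simp
  qed (use remainder in auto)
  finally show "\<bar>(\<integral>\<omega>. g \<omega> * exp (Z \<omega> + s * Y \<omega>) \<partial>M) - (\<integral>\<omega>. g \<omega> * exp (Z \<omega> + 0 * Y \<omega>) \<partial>M)
      - s * (\<integral>\<omega>. g \<omega> * Y \<omega> * exp (Z \<omega>) \<partial>M)\<bar> \<le> (\<integral>\<omega>. H \<omega> \<partial>M) * s\<^sup>2"
    by (simp add: mult.commute)
qed

lemma integrable_exp_abs_if_even_moments:
  fixes Y :: "'a \<Rightarrow> real"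
  assumes [measurable]: "Y \<in> borel_measurable M"
    and int: "\<And>q. integrable M (\<lambda>\<omega>. Y \<omega> ^ (2 * q))"
    and moments: "\<And>q. (\<integral>\<omega>. Y \<omega> ^ (2 * q) \<partial>M) \<le> C * K ^ q * (fact q)\<^sup>2"
    and "0 \<le> K" "0 < \<sigma>" "\<sigma>\<^sup>2 * K \<le> 1 / 4"
  shows "integrable M (\<lambda>\<omega>. exp (\<sigma> * \<bar>Y \<omega>\<bar>))"
proof -
  define f where "f q \<omega> = (\<sigma> * Y \<omega>) ^ (2 * q) / fact (2 * q)" for q \<omega>
  have f_eq: "f q = (\<lambda>\<omega>. \<sigma> ^ (2 * q) / fact (2 * q) * Y \<omega> ^ (2 * q))" for q
    by (auto simp: f_def power_mult_distrib)
  have f_nonneg: "0 \<le> f q \<omega>" for q \<omega>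
    by (simp add: f_def power_mult)
  have f_int: "integrable M (f q)" for q
    unfolding f_eq using int by simp
  have "0 \<le> C"
    using moments[of 0] measure_nonneg[of M "space M"] by (simp del: measure_nonneg)
  have f_integral_le: "(\<integral>\<omega>. f q \<omega> \<partial>M) \<le> C * (1 / 4) ^ q" for q
  proof -
    have "(\<integral>\<omega>. f q \<omega> \<partial>M) = \<sigma> ^ (2 * q) / fact (2 * q) * (\<integral>\<omega>. Y \<omega> ^ (2 * q) \<partial>M)"
      unfolding f_eq by simp
    also have "\<dots> \<le> \<sigma> ^ (2 * q) / fact (2 * q) * (C * K ^ q * (fact q)\<^sup>2)"
      using moments by (intro mult_left_mono) auto
    also have "\<dots> = C * (\<sigma>\<^sup>2 * K) ^ q * ((fact q)\<^sup>2 / fact (2 * q))"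
      by (simp add: power_mult power_mult_distrib)
    also have "\<dots> \<le> C * (1 / 4) ^ q * 1"
      using \<open>0 \<le> C\<close> \<open>0 \<le> K\<close> assms(6) square_fact_le_2_fact[of q]
      by (intro mult_mono power_mono) (auto simp: power2_eq_square)
    finally show ?thesis
      by simp
  qed
  have "summable (\<lambda>q. \<integral>\<omega>. norm (f q \<omega>) \<partial>M)"
  proof (rule summable_comparison_test)
    show "\<exists>N. \<forall>q\<ge>N. norm (\<integral>\<omega>. norm (f q \<omega>) \<partial>M) \<le> C * (1 / 4) ^ q"
      using f_integral_le f_nonneg by (auto intro!: integral_nonneg_AE)
    show "summable (\<lambda>q. C * (1 / 4 :: real) ^ q)"
      by (intro summable_mult summable_geometric) auto
  qed
  moreover have f_sums: "(\<lambda>q. f q \<omega>) sums cosh (\<sigma> * Y \<omega>)" for \<omega>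
    unfolding f_def by (rule cosh_sums_even_powers)
  then have "AE \<omega> in M. summable (\<lambda>q. norm (f q \<omega>))"
    using f_nonneg by (auto simp: sums_iff)
  ultimately have "integrable M (\<lambda>\<omega>. \<Sum>q. f q \<omega>)"
    using f_int by (intro integrable_suminf)
  then have "integrable M (\<lambda>\<omega>. 2 * cosh (\<sigma> * Y \<omega>))"
    using f_sums by (simp add: sums_iff)
  then show ?thesis
  proof (rule integrable_dominated)
    show "(\<lambda>\<omega>. exp (\<sigma> * \<bar>Y \<omega>\<bar>)) \<in> borel_measurable M"
      by measurable
    show "norm (exp (\<sigma> * \<bar>Y \<omega>\<bar>)) \<le> 2 * cosh (\<sigma> * Y \<omega>)" for \<omega>
      by (cases "0 \<le> Y \<omega>") (auto simp: cosh_def)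
  qed
qed

section \<open>Polynomial random variables\<close>

definition l1_normRV :: "('d::finite \<Rightarrow> 'a \<Rightarrow> real) \<Rightarrow> 'a \<Rightarrow> real" where
  "l1_normRV X \<omega> = (\<Sum>i\<in>UNIV. \<bar>X i \<omega>\<bar>)"

lemma borel_measurable_l1_normRV [measurable]:
  assumes [measurable]: "\<And>i. X i \<in> borel_measurable M"
  shows "l1_normRV X \<in> borel_measurable M"
  unfolding l1_normRV_def by measurable

lemma l1_normRV_nonneg: "0 \<le> l1_normRV X \<omega>"
  unfolding l1_normRV_def by (simp add: sum_nonneg)

lemma abs_le_l1_normRV: "\<bar>X i \<omega>\<bar> \<le> l1_normRV X \<omega>"
  unfolding l1_normRV_def by (rule member_le_sum) auto

locale finite_moment_vector = prob_space M for M :: "'a measure" +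
  fixes X :: "'d::finite \<Rightarrow> 'a \<Rightarrow> real"
  assumes finite_moments: "finite_moments M X"
begin

lemma X_measurable [measurable]: "X i \<in> borel_measurable M"
  using finite_moments by (simp add: finite_moments_def)

lemma integrable_abs_X_power: "integrable M (\<lambda>\<omega>. \<bar>X i \<omega>\<bar> ^ n)"
  using finite_moments by (simp add: finite_moments_def)

lemma integrable_l1_normRV_power: "integrable M (\<lambda>\<omega>. (1 + l1_normRV X \<omega>) ^ N)"
proof (rule integrable_dominated)
  let ?d = "real CARD('d)"
  show "integrable M (\<lambda>\<omega>. \<Sum>i\<in>UNIV. 2 ^ N * (1 + ?d ^ N * \<bar>X i \<omega>\<bar> ^ N))"
    using integrable_abs_X_power by (auto simp: ring_distribs)
  show "norm ((1 + l1_normRV X \<omega>) ^ N) \<le> (\<Sum>i\<in>UNIV. 2 ^ N * (1 + ?d ^ N * \<bar>X i \<omega>\<bar> ^ N))"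
    for \<omega>
  proof -
    have "(1 + max 0 (l1_normRV X \<omega>)) ^ N \<le> (\<Sum>i\<in>UNIV. (1 + max 0 (?d * \<bar>X i \<omega>\<bar>)) ^ N)"
      unfolding l1_normRV_def by (rule mono_sum_le_sum_mono) (auto simp: mono_def intro!: power_mono)
    also have "\<dots> \<le> (\<Sum>i\<in>UNIV. 2 ^ N * (1 + ?d ^ N * \<bar>X i \<omega>\<bar> ^ N))"
      using one_plus_power_le[of "?d * \<bar>X i \<omega>\<bar>" N for i]
      by (intro sum_mono) (simp add: power_mult_distrib)
    finally show ?thesis
      using l1_normRV_nonneg[of X \<omega>] by simp
  qed
qed simp

text \<open>This class replaces \<open>L\<^sup>2(P)\<close>: it is an algebra closed under conjugation, and it lies
  in \<open>L\<^sup>1(P)\<close> by the moment assumption.\<close>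
definition poly_growth :: "('a \<Rightarrow> complex) \<Rightarrow> bool" where
  "poly_growth f \<longleftrightarrow> f \<in> borel_measurable M \<and>
     (\<exists>C N. 0 \<le> C \<and> (\<forall>\<omega>. cmod (f \<omega>) \<le> C * (1 + l1_normRV X \<omega>) ^ N))"

lemma poly_growthI:
  "f \<in> borel_measurable M \<Longrightarrow> 0 \<le> C \<Longrightarrow> (\<And>\<omega>. cmod (f \<omega>) \<le> C * (1 + l1_normRV X \<omega>) ^ N)
    \<Longrightarrow> poly_growth f"
  unfolding poly_growth_def by blast

lemma poly_growth_measurable: "poly_growth f \<Longrightarrow> f \<in> borel_measurable M"
  by (simp add: poly_growth_def)

lemma integrable_poly_growth:
  assumes "poly_growth f"
  shows "integrable M f"
proof -
  obtain C N where "\<And>\<omega>. cmod (f \<omega>) \<le> C * (1 + l1_normRV X \<omega>) ^ N"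
    using assms by (auto simp: poly_growth_def)
  then show ?thesis
  proof (rule integrable_dominated[rotated 2])
    show "integrable M (\<lambda>\<omega>. C * (1 + l1_normRV X \<omega>) ^ N)"
      using integrable_l1_normRV_power by simp
  qed (use poly_growth_measurable[OF assms] in auto)
qed

lemma integrable_of_real_poly_growth:
  assumes "poly_growth (\<lambda>\<omega>. complex_of_real (f \<omega>))"
  shows "integrable M f"
  using integrable_Re[OF integrable_poly_growth[OF assms]] by simp

lemma poly_growth_of_realI:
  assumes "f \<in> borel_measurable M" "0 \<le> C" "\<And>\<omega>. \<bar>f \<omega>\<bar> \<le> C * (1 + l1_normRV X \<omega>) ^ N"
  shows "poly_growth (\<lambda>\<omega>. complex_of_real (f \<omega>))"
  using assms by (intro poly_growthI[of _ C N]) auto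

lemma poly_growth_const: "poly_growth (\<lambda>\<omega>. c)"
  by (rule poly_growthI[where C="cmod c" and N=0]) auto

lemma poly_growth_add:
  assumes "poly_growth f" "poly_growth g"
  shows "poly_growth (\<lambda>\<omega>. f \<omega> + g \<omega>)"
proof -
  obtain C1 N1 where C1: "0 \<le> C1" "\<And>\<omega>. cmod (f \<omega>) \<le> C1 * (1 + l1_normRV X \<omega>) ^ N1"
    using assms(1) by (auto simp: poly_growth_def)
  obtain C2 N2 where C2: "0 \<le> C2" "\<And>\<omega>. cmod (g \<omega>) \<le> C2 * (1 + l1_normRV X \<omega>) ^ N2"
    using assms(2) by (auto simp: poly_growth_def)
  show ?thesis
  proof (rule poly_growthI[of _ "C1 + C2" "N1 + N2"])
    show "(\<lambda>\<omega>. f \<omega> + g \<omega>) \<in> borel_measurable M"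
      using assms by (auto simp: poly_growth_def)
    fix \<omega>
    let ?S = "1 + l1_normRV X \<omega>"
    have "?S ^ N1 \<le> ?S ^ (N1 + N2)" "?S ^ N2 \<le> ?S ^ (N1 + N2)"
      using l1_normRV_nonneg[of X \<omega>] by (auto intro: power_increasing)
    then have "C1 * ?S ^ N1 + C2 * ?S ^ N2 \<le> (C1 + C2) * ?S ^ (N1 + N2)"
      using C1(1) C2(1) by (simp add: distrib_right add_mono mult_left_mono)
    then show "cmod (f \<omega> + g \<omega>) \<le> (C1 + C2) * ?S ^ (N1 + N2)"
      using norm_triangle_ineq[of "f \<omega>" "g \<omega>"] C1(2)[of \<omega>] C2(2)[of \<omega>] by linarith
  qed (use C1 C2 in auto)
qed

lemma poly_growth_mult:
  assumes "poly_growth f" "poly_growth g"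
  shows "poly_growth (\<lambda>\<omega>. f \<omega> * g \<omega>)"
proof -
  obtain C1 N1 where C1: "0 \<le> C1" "\<And>\<omega>. cmod (f \<omega>) \<le> C1 * (1 + l1_normRV X \<omega>) ^ N1"
    using assms(1) by (auto simp: poly_growth_def)
  obtain C2 N2 where C2: "0 \<le> C2" "\<And>\<omega>. cmod (g \<omega>) \<le> C2 * (1 + l1_normRV X \<omega>) ^ N2"
    using assms(2) by (auto simp: poly_growth_def)
  show ?thesis
  proof (rule poly_growthI[of _ "C1 * C2" "N1 + N2"])
    show "(\<lambda>\<omega>. f \<omega> * g \<omega>) \<in> borel_measurable M"
      using assms by (auto simp: poly_growth_def)
    show "cmod (f \<omega> * g \<omega>) \<le> C1 * C2 * (1 + l1_normRV X \<omega>) ^ (N1 + N2)" for \<omega>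
      using mult_mono[OF C1(2)[of \<omega>] C2(2)[of \<omega>]] C1(1) l1_normRV_nonneg[of X \<omega>]
      by (simp add: norm_mult power_add mult_ac)
  qed (use C1 C2 in auto)
qed

lemma poly_growth_cmult: "poly_growth f \<Longrightarrow> poly_growth (\<lambda>\<omega>. c * f \<omega>)"
  by (rule poly_growth_mult[OF poly_growth_const])

lemma poly_growth_diff:
  assumes "poly_growth f" "poly_growth g"
  shows "poly_growth (\<lambda>\<omega>. f \<omega> - g \<omega>)"
  using poly_growth_add[OF assms(1) poly_growth_cmult[OF assms(2), of "-1"]] by simp

lemma poly_growth_sum:
  "finite K \<Longrightarrow> (\<And>k. k \<in> K \<Longrightarrow> poly_growth (f k)) \<Longrightarrow> poly_growth (\<lambda>\<omega>. \<Sum>k\<in>K. f k \<omega>)"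
  by (induction K rule: finite_induct) (auto intro: poly_growth_const poly_growth_add)

lemma poly_growth_power: "poly_growth f \<Longrightarrow> poly_growth (\<lambda>\<omega>. f \<omega> ^ n)"
  by (induction n) (auto intro: poly_growth_mult poly_growth_const)

lemma poly_growth_of_real_mult:
  "poly_growth (\<lambda>\<omega>. complex_of_real (f \<omega>)) \<Longrightarrow> poly_growth (\<lambda>\<omega>. complex_of_real (g \<omega>))
    \<Longrightarrow> poly_growth (\<lambda>\<omega>. complex_of_real (f \<omega> * g \<omega>))"
  unfolding of_real_mult by (rule poly_growth_mult)

lemma poly_growth_of_real_power:
  "poly_growth (\<lambda>\<omega>. complex_of_real (f \<omega>)) \<Longrightarrow> poly_growth (\<lambda>\<omega>. complex_of_real (f \<omega> ^ n))"
  unfolding of_real_power by (rule poly_growth_power)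

lemma poly_growth_cnj:
  assumes "poly_growth f"
  shows "poly_growth (\<lambda>\<omega>. cnj (f \<omega>))"
proof -
  obtain C N where "0 \<le> C" "\<And>\<omega>. cmod (f \<omega>) \<le> C * (1 + l1_normRV X \<omega>) ^ N"
    using assms by (auto simp: poly_growth_def)
  moreover have "(\<lambda>\<omega>. cnj (f \<omega>)) \<in> borel_measurable M"
    using poly_growth_measurable[OF assms]
    by (intro borel_measurable_continuous_on[where f=cnj] continuous_on_cnj continuous_on_id)
  ultimately show ?thesis
    by (intro poly_growthI[of _ C N]) auto
qed

lemma poly_growth_X: "poly_growth (\<lambda>\<omega>. complex_of_real (X i \<omega>))"
  by (intro poly_growth_of_realI[of _ 1 1]) (auto intro: order_trans[OF abs_le_l1_normRV])

lemma poly_growth_X_power: "poly_growth (\<lambda>\<omega>. complex_of_real (X i \<omega> ^ n))"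
  using poly_growth_power[OF poly_growth_X] by simp

lemma poly_growth_abs_X: "poly_growth (\<lambda>\<omega>. complex_of_real \<bar>X i \<omega>\<bar>)"
  by (intro poly_growth_of_realI[of _ 1 1]) (auto intro: order_trans[OF abs_le_l1_normRV])

lemma poly_growth_l1_normRV: "poly_growth (\<lambda>\<omega>. complex_of_real (l1_normRV X \<omega>))"
  using l1_normRV_nonneg[of X] by (intro poly_growth_of_realI[of _ 1 1]) auto

lemma poly_growth_monomialRV: "poly_growth (\<lambda>\<omega>. complex_of_real (monomialRV X k \<omega>))"
proof (rule poly_growth_of_realI[of _ 1 "sum k UNIV"])
  show "monomialRV X k \<in> borel_measurable M"
    unfolding monomialRV_def by measurable
  fix \<omega>
  have "\<bar>monomialRV X k \<omega>\<bar> = (\<Prod>i\<in>UNIV. \<bar>X i \<omega>\<bar> ^ k i)"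
    unfolding monomialRV_def by (simp add: abs_prod power_abs)
  also have "\<dots> \<le> (\<Prod>i\<in>UNIV. (1 + l1_normRV X \<omega>) ^ k i)"
    by (intro prod_mono conjI power_mono) (auto intro: order_trans[OF abs_le_l1_normRV])
  also have "\<dots> = (1 + l1_normRV X \<omega>) ^ sum k UNIV"
    by (simp add: power_sum)
  finally show "\<bar>monomialRV X k \<omega>\<bar> \<le> 1 * (1 + l1_normRV X \<omega>) ^ sum k UNIV"
    by simp
qed simp

end

section \<open>Orthogonal projections onto polynomials and the mean of \<open>U\<^sub>i p\<close>\<close>

definition finite_span :: "'k set \<Rightarrow> ('k \<Rightarrow> 'a \<Rightarrow> complex) \<Rightarrow> ('a \<Rightarrow> complex) set" where
  "finite_span K b = {f. \<exists>c. f = (\<lambda>\<omega>. \<Sum>k\<in>K. c k * b k \<omega>)}"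

lemma finite_span_eqI: "f = (\<lambda>\<omega>. \<Sum>k\<in>K. c k * b k \<omega>) \<Longrightarrow> f \<in> finite_span K b"
  unfolding finite_span_def by blast

lemma finite_span_basis:
  assumes "finite K" "k \<in> K"
  shows "b k \<in> finite_span K b"
proof -
  have "b k = (\<lambda>\<omega>. \<Sum>j\<in>K. (if j = k then 1 else 0) * b j \<omega>)"
    using assms by (simp add: if_distrib[of "\<lambda>x. x * _"] cong: if_cong)
  then show ?thesis
    by (rule finite_span_eqI)
qed

lemma finite_span_add:
  assumes "f \<in> finite_span K b" "g \<in> finite_span K b"
  shows "(\<lambda>\<omega>. f \<omega> + g \<omega>) \<in> finite_span K b"
proof -
  obtain c d where "f = (\<lambda>\<omega>. \<Sum>k\<in>K. c k * b k \<omega>)" "g = (\<lambda>\<omega>. \<Sum>k\<in>K. d k * b k \<omega>)"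
    using assms by (auto simp: finite_span_def)
  then have "(\<lambda>\<omega>. f \<omega> + g \<omega>) = (\<lambda>\<omega>. \<Sum>k\<in>K. (c k + d k) * b k \<omega>)"
    by (simp add: sum.distrib distrib_right)
  then show ?thesis
    by (rule finite_span_eqI)
qed

lemma finite_span_cmult:
  assumes "f \<in> finite_span K b"
  shows "(\<lambda>\<omega>. a * f \<omega>) \<in> finite_span K b"
proof -
  obtain c where "f = (\<lambda>\<omega>. \<Sum>k\<in>K. c k * b k \<omega>)"
    using assms by (auto simp: finite_span_def)
  then have "(\<lambda>\<omega>. a * f \<omega>) = (\<lambda>\<omega>. \<Sum>k\<in>K. (a * c k) * b k \<omega>)"
    by (simp add: sum_distrib_left mult.assoc)
  then show ?thesis
    by (rule finite_span_eqI)
qed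

lemma finite_span_mono:
  assumes "finite K'" "K \<subseteq> K'" "f \<in> finite_span K b"
  shows "f \<in> finite_span K' b"
proof -
  obtain c where c: "f = (\<lambda>\<omega>. \<Sum>k\<in>K. c k * b k \<omega>)"
    using assms(3) by (auto simp: finite_span_def)
  have "f = (\<lambda>\<omega>. \<Sum>k\<in>K'. (if k \<in> K then c k else 0) * b k \<omega>)"
    unfolding c using assms(1,2) by (intro ext sum.mono_neutral_cong_left) auto
  then show ?thesis
    by (rule finite_span_eqI)
qed

lemma finite_degree_le_multi_indices: "finite {k :: 'd::finite \<Rightarrow> nat. sum k UNIV \<le> n}"
proof (rule finite_subset)
  show "{k :: 'd \<Rightarrow> nat. sum k UNIV \<le> n} \<subseteq> PiE UNIV (\<lambda>_. {..n})"
  proof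
    fix k :: "'d \<Rightarrow> nat"
    assume "k \<in> {k. sum k UNIV \<le> n}"
    then have "k i \<le> n" for i
      using member_le_sum[of i UNIV k] by auto
    then show "k \<in> PiE UNIV (\<lambda>_. {..n})"
      by (auto simp: PiE_def extensional_def)
  qed
qed (simp add: finite_PiE)

lemma polyRV_deg_eq_finite_span:
  "polyRV_deg X n = finite_span {k. sum k UNIV \<le> n} (\<lambda>k \<omega>. complex_of_real (monomialRV X k \<omega>))"
proof
  show "finite_span {k. sum k UNIV \<le> n} (\<lambda>k \<omega>. complex_of_real (monomialRV X k \<omega>)) \<subseteq> polyRV_deg X n"
    unfolding finite_span_def polyRV_deg_def
    by (auto intro!: exI[of _ "{k. sum k UNIV \<le> n}"] finite_degree_le_multi_indices)
  show "polyRV_deg X n \<subseteq> finite_span {k. sum k UNIV \<le> n} (\<lambda>k \<omega>. complex_of_real (monomialRV X k \<omega>))"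
  proof
    fix f
    assume "f \<in> polyRV_deg X n"
    then obtain K c where K: "finite K" "\<forall>k\<in>K. sum k UNIV \<le> n"
      and f: "f = (\<lambda>\<omega>. \<Sum>k\<in>K. c k * complex_of_real (monomialRV X k \<omega>))"
      unfolding polyRV_deg_def by blast
    have "f \<in> finite_span K (\<lambda>k \<omega>. complex_of_real (monomialRV X k \<omega>))"
      using f by (rule finite_span_eqI)
    then show "f \<in> finite_span {k. sum k UNIV \<le> n} (\<lambda>k \<omega>. complex_of_real (monomialRV X k \<omega>))"
      using K by (intro finite_span_mono[OF finite_degree_le_multi_indices]) auto
  qed
qed

lemma X_power_in_polyRV_deg:
  assumes "m \<le> n"
  shows "(\<lambda>\<omega>. complex_of_real (X i \<omega> ^ m)) \<in> polyRV_deg X n"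
proof -
  let ?k = "\<lambda>j. if j = i then m else 0"
  have "monomialRV X ?k \<omega> = X i \<omega> ^ m" for \<omega>
    unfolding monomialRV_def by (simp add: if_distrib[of "\<lambda>e. X _ \<omega> ^ e"] prod.delta cong: if_cong)
  moreover have "sum ?k UNIV = m"
    by (simp add: sum.delta)
  ultimately show ?thesis
    unfolding polyRV_deg_def using assms
    by (intro CollectI exI[of _ "{?k}"] exI[of _ "\<lambda>_. 1"]) simp
qed

lemma one_in_polyRV_deg: "(\<lambda>\<omega>. 1) \<in> polyRV_deg X n"
  using X_power_in_polyRV_deg[of 0 n] by simp

lemma X_in_polyRV_deg: "1 \<le> n \<Longrightarrow> (\<lambda>\<omega>. complex_of_real (X i \<omega>)) \<in> polyRV_deg X n"
  using X_power_in_polyRV_deg[of 1 n] by simp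

lemma X_power_in_polyRV: "(\<lambda>\<omega>. complex_of_real (X i \<omega> ^ n)) \<in> polyRV X"
  unfolding polyRV_def using X_power_in_polyRV_deg[of n n] by blast

lemma polyRV_deg_0_const:
  assumes "f \<in> polyRV_deg X 0"
  obtains c where "f = (\<lambda>\<omega>. c)"
proof -
  obtain K c where K: "\<forall>k\<in>K. sum k UNIV \<le> 0"
    and f: "f = (\<lambda>\<omega>. \<Sum>k\<in>K. c k * complex_of_real (monomialRV X k \<omega>))"
    using assms unfolding polyRV_deg_def by blast
  have "k \<in> K \<Longrightarrow> monomialRV X k \<omega> = 1" for k \<omega>
    using K unfolding monomialRV_def by auto
  then have "f = (\<lambda>\<omega>. \<Sum>k\<in>K. c k)"
    unfolding f by (auto intro!: sum.cong)
  then show ?thesis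
    using that by blast
qed

lemma polyRV_deg_degRV: "p \<in> polyRV X \<Longrightarrow> p \<in> polyRV_deg X (degRV X p)"
  unfolding degRV_def polyRV_def by (rule LeastI_ex) blast

context finite_moment_vector
begin

lemma L2inner_add_right:
  assumes "poly_growth f" "poly_growth g1" "poly_growth g2"
  shows "L2inner M f (\<lambda>\<omega>. g1 \<omega> + g2 \<omega>) = L2inner M f g1 + L2inner M f g2"
  unfolding L2inner_def using assms
  by (simp add: distrib_left integrable_poly_growth poly_growth_mult poly_growth_cnj)

lemma L2inner_diff_left:
  assumes "poly_growth f1" "poly_growth f2" "poly_growth g"
  shows "L2inner M (\<lambda>\<omega>. f1 \<omega> - f2 \<omega>) g = L2inner M f1 g - L2inner M f2 g"
  unfolding L2inner_def using assms
  by (simp add: left_diff_distrib integrable_poly_growth poly_growth_mult poly_growth_cnj)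

lemma L2inner_cmult_left: "L2inner M (\<lambda>\<omega>. c * f \<omega>) g = c * L2inner M f g"
  unfolding L2inner_def by (simp add: mult.assoc)

lemma L2inner_finite_span_right_eq_0:
  assumes "poly_growth f" "finite K" "\<And>k. k \<in> K \<Longrightarrow> poly_growth (b k)"
    and "\<forall>k\<in>K. L2inner M f (b k) = 0" "g \<in> finite_span K b"
  shows "L2inner M f g = 0"
proof -
  obtain c where c: "g = (\<lambda>\<omega>. \<Sum>k\<in>K. c k * b k \<omega>)"
    using assms(5) by (auto simp: finite_span_def)
  have "L2inner M f g = (\<integral>\<omega>. (\<Sum>k\<in>K. cnj (c k) * (f \<omega> * cnj (b k \<omega>))) \<partial>M)"
    unfolding L2inner_def c by (simp add: sum_distrib_left algebra_simps)
  also have "\<dots> = (\<Sum>k\<in>K. \<integral>\<omega>. cnj (c k) * (f \<omega> * cnj (b k \<omega>)) \<partial>M)"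
    using assms(1,3)
    by (intro Bochner_Integration.integral_sum integrable_mult_right integrable_poly_growth
        poly_growth_mult poly_growth_cnj)
  also have "\<dots> = (\<Sum>k\<in>K. cnj (c k) * L2inner M f (b k))"
    unfolding L2inner_def by simp
  finally show ?thesis
    using assms(4) by simp
qed

lemma L2inner_eq_0_if_L2inner_self_eq_0:
  assumes "poly_growth f" "poly_growth r" "L2inner M r r = 0"
  shows "L2inner M f r = 0"
proof -
  have int: "integrable M (\<lambda>\<omega>. (cmod (r \<omega>))\<^sup>2)"
    using integrable_norm[OF integrable_poly_growth[OF poly_growth_mult[OF assms(2,2)]]]
    by (simp add: norm_mult power2_eq_square)
  have "L2inner M r r = complex_of_real (\<integral>\<omega>. (cmod (r \<omega>))\<^sup>2 \<partial>M)"
    unfolding L2inner_def by (simp add: complex_norm_square[symmetric] del: of_real_power)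
  then have "AE \<omega> in M. (cmod (r \<omega>))\<^sup>2 = 0"
    using assms(3) integral_nonneg_eq_0_iff_AE[OF int] by simp
  then have "AE \<omega> in M. f \<omega> * cnj (r \<omega>) = 0"
    by (auto elim!: AE_mp)
  then have "(\<integral>\<omega>. f \<omega> * cnj (r \<omega>) \<partial>M) = (\<integral>\<omega>. 0 \<partial>M)"
    using assms(1,2)
    by (intro integral_cong_AE) (auto intro!: poly_growth_measurable poly_growth_mult poly_growth_cnj)
  then show ?thesis
    unfolding L2inner_def by simp
qed

text \<open>One Gram--Schmidt step. If \<open>r\<close> is null, then \<open>c = 0\<close> by the convention \<open>x / 0 = 0\<close>,
  and the residual of \<open>h\<close> is already orthogonal to \<open>r\<close>.\<close>
lemma orthogonal_projection_insert:
  assumes "finite K" and b: "\<And>k. k \<in> insert a K \<Longrightarrow> poly_growth (b k)" and "poly_growth h"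
    and p': "p' \<in> finite_span K b" "\<forall>k\<in>K. L2inner M (\<lambda>\<omega>. h \<omega> - p' \<omega>) (b k) = 0"
    and q: "q \<in> finite_span K b" "\<forall>k\<in>K. L2inner M (\<lambda>\<omega>. b a \<omega> - q \<omega>) (b k) = 0"
  shows "\<exists>p\<in>finite_span (insert a K) b. \<forall>k\<in>insert a K. L2inner M (\<lambda>\<omega>. h \<omega> - p \<omega>) (b k) = 0"
proof -
  define r where "r = (\<lambda>\<omega>. b a \<omega> - q \<omega>)"
  define c where "c = L2inner M (\<lambda>\<omega>. h \<omega> - p' \<omega>) r / L2inner M r r"
  define p where "p = (\<lambda>\<omega>. p' \<omega> + c * r \<omega>)"
  have span_growth: "poly_growth g" if "g \<in> finite_span K b" for g
    using that b \<open>finite K\<close> by (auto simp: finite_span_def intro!: poly_growth_sum poly_growth_cmult)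
  have growth: "poly_growth r" "poly_growth (\<lambda>\<omega>. h \<omega> - p' \<omega>)" "poly_growth (\<lambda>\<omega>. c * r \<omega>)"
    "poly_growth (\<lambda>\<omega>. h \<omega> - p \<omega>)" "poly_growth q"
    unfolding r_def p_def diff_add_eq_diff_diff_swap
    using b \<open>poly_growth h\<close> span_growth[OF p'(1)] span_growth[OF q(1)]
    by (auto intro!: poly_growth_diff poly_growth_cmult)
  have residual: "L2inner M (\<lambda>\<omega>. h \<omega> - p \<omega>) g =
      L2inner M (\<lambda>\<omega>. h \<omega> - p' \<omega>) g - c * L2inner M r g" if "poly_growth g" for g
  proof -
    have "(\<lambda>\<omega>. h \<omega> - p \<omega>) = (\<lambda>\<omega>. (h \<omega> - p' \<omega>) - c * r \<omega>)"
      by (simp add: p_def algebra_simps)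
    then show ?thesis
      using L2inner_diff_left[OF growth(2,3) that] by (simp add: L2inner_cmult_left)
  qed
  have orth_K: "\<forall>k\<in>K. L2inner M (\<lambda>\<omega>. h \<omega> - p \<omega>) (b k) = 0"
    using residual b p'(2) q(2) by (simp add: r_def)
  have "L2inner M (\<lambda>\<omega>. h \<omega> - p \<omega>) r = 0"
  proof (cases "L2inner M r r = 0")
    case True
    then show ?thesis
      using residual[OF growth(1)] L2inner_eq_0_if_L2inner_self_eq_0[OF growth(2,1)]
      by (simp add: c_def)
  next
    case False
    then show ?thesis
      using residual[OF growth(1)] by (simp add: c_def)
  qed
  moreover have "L2inner M (\<lambda>\<omega>. h \<omega> - p \<omega>) q = 0"
    using L2inner_finite_span_right_eq_0[OF growth(4) \<open>finite K\<close> _ orth_K q(1)] b by blast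
  ultimately have "L2inner M (\<lambda>\<omega>. h \<omega> - p \<omega>) (b a) = 0"
    using L2inner_add_right[OF growth(4,1,5)] by (simp add: r_def)
  moreover have "p \<in> finite_span (insert a K) b"
  proof -
    have "p' \<in> finite_span (insert a K) b" "q \<in> finite_span (insert a K) b"
      using p'(1) q(1) \<open>finite K\<close> by (auto intro: finite_span_mono)
    moreover have "b a \<in> finite_span (insert a K) b"
      using \<open>finite K\<close> by (simp add: finite_span_basis)
    ultimately have "(\<lambda>\<omega>. p' \<omega> + c * (b a \<omega> + (-1) * q \<omega>)) \<in> finite_span (insert a K) b"
      by (intro finite_span_add finite_span_cmult)
    then show ?thesis
      by (simp add: p_def r_def)
  qed
  ultimately show ?thesis
    using orth_K by blast
qed

lemma orthogonal_projection_exists: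
  assumes "finite K" "\<And>k. k \<in> K \<Longrightarrow> poly_growth (b k)" "poly_growth h"
  shows "\<exists>p\<in>finite_span K b. \<forall>k\<in>K. L2inner M (\<lambda>\<omega>. h \<omega> - p \<omega>) (b k) = 0"
  using assms
proof (induction K arbitrary: h rule: finite_induct)
  case empty
  show ?case
    by (auto simp: finite_span_def)
next
  case (insert a K)
  obtain p' where "p' \<in> finite_span K b" "\<forall>k\<in>K. L2inner M (\<lambda>\<omega>. h \<omega> - p' \<omega>) (b k) = 0"
    using insert.IH[of h] insert.prems by blast
  moreover obtain q where "q \<in> finite_span K b" "\<forall>k\<in>K. L2inner M (\<lambda>\<omega>. b a \<omega> - q \<omega>) (b k) = 0"
    using insert.IH[of "b a"] insert.prems by blast
  ultimately show ?case
    using insert.hyps insert.prems by (intro orthogonal_projection_insert) auto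
qed

lemma poly_growth_polyRV_deg: "f \<in> polyRV_deg X n \<Longrightarrow> poly_growth f"
  unfolding polyRV_deg_eq_finite_span finite_span_def
  using finite_degree_le_multi_indices
  by (auto intro!: poly_growth_sum poly_growth_cmult poly_growth_monomialRV)

lemma poly_growth_polyRV: "f \<in> polyRV X \<Longrightarrow> poly_growth f"
  by (auto simp: polyRV_def intro: poly_growth_polyRV_deg)

text \<open>\<^const>\<open>L2proj\<close> is defined by choice; the Gram--Schmidt construction above shows
  that the choice is possible.\<close>
lemma L2proj_polyRV_deg:
  assumes "poly_growth h"
  shows "L2proj M (polyRV_deg X n) h \<in> polyRV_deg X n
    \<and> (\<forall>g\<in>polyRV_deg X n. L2inner M (\<lambda>\<omega>. h \<omega> - L2proj M (polyRV_deg X n) h \<omega>) g = 0)"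
proof -
  let ?b = "\<lambda>k \<omega>. complex_of_real (monomialRV X k \<omega>)"
  obtain p where p: "p \<in> polyRV_deg X n"
    "\<forall>k\<in>{k. sum k UNIV \<le> n}. L2inner M (\<lambda>\<omega>. h \<omega> - p \<omega>) (?b k) = 0"
    using orthogonal_projection_exists[where K="{k. sum k UNIV \<le> n}" and b="?b" and h=h]
      finite_degree_le_multi_indices poly_growth_monomialRV assms
    unfolding polyRV_deg_eq_finite_span by blast
  let ?P = "\<lambda>p. p \<in> polyRV_deg X n \<and> (\<forall>g\<in>polyRV_deg X n. L2inner M (\<lambda>\<omega>. h \<omega> - p \<omega>) g = 0)"
  have "poly_growth (\<lambda>\<omega>. h \<omega> - p \<omega>)"
    using assms poly_growth_polyRV_deg[OF p(1)] by (rule poly_growth_diff)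
  then have "\<forall>g\<in>polyRV_deg X n. L2inner M (\<lambda>\<omega>. h \<omega> - p \<omega>) g = 0"
    unfolding polyRV_deg_eq_finite_span
    using L2inner_finite_span_right_eq_0[OF _ finite_degree_le_multi_indices, where b="?b"]
      poly_growth_monomialRV p(2) by blast
  with p(1) have "?P p"
    by blast
  then show ?thesis
    unfolding L2proj_def by (rule someI[where P="?P"])
qed

lemma poly_growth_L2proj: "poly_growth h \<Longrightarrow> poly_growth (L2proj M (polyRV_deg X n) h)"
  using L2proj_polyRV_deg poly_growth_polyRV_deg by blast

lemma integral_L2proj_mult_cnj:
  assumes "poly_growth h" "g \<in> polyRV_deg X n"
  shows "(\<integral>\<omega>. L2proj M (polyRV_deg X n) h \<omega> * cnj (g \<omega>) \<partial>M) = (\<integral>\<omega>. h \<omega> * cnj (g \<omega>) \<partial>M)"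
proof -
  have "L2inner M (\<lambda>\<omega>. h \<omega> - L2proj M (polyRV_deg X n) h \<omega>) g = 0"
    using L2proj_polyRV_deg[OF assms(1)] assms(2) by blast
  moreover have "L2inner M (\<lambda>\<omega>. h \<omega> - L2proj M (polyRV_deg X n) h \<omega>) g
      = L2inner M h g - L2inner M (L2proj M (polyRV_deg X n) h) g"
    using assms by (intro L2inner_diff_left poly_growth_L2proj) (auto intro: poly_growth_polyRV_deg)
  ultimately show ?thesis
    by (simp add: L2inner_def)
qed

lemma integral_L2proj: "poly_growth h \<Longrightarrow> integral\<^sup>L M (L2proj M (polyRV_deg X n) h) = integral\<^sup>L M h"
  using integral_L2proj_mult_cnj[OF _ one_in_polyRV_deg] by simp

lemma L2proj_polyRV_deg_0:
  assumes "poly_growth h"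
  shows "L2proj M (polyRV_deg X 0) h = (\<lambda>\<omega>. integral\<^sup>L M h)"
proof -
  obtain c where c: "L2proj M (polyRV_deg X 0) h = (\<lambda>\<omega>. c)"
    using L2proj_polyRV_deg[OF assms] polyRV_deg_0_const by blast
  then show ?thesis
    using integral_L2proj[OF assms, of 0] by (simp add: prob_space)
qed

lemma integral_X_mult_L2proj:
  assumes "poly_growth h" "1 \<le> n"
  shows "(\<integral>\<omega>. complex_of_real (X i \<omega>) * L2proj M (polyRV_deg X n) h \<omega> \<partial>M)
    = (\<integral>\<omega>. complex_of_real (X i \<omega>) * h \<omega> \<partial>M)"
  using integral_L2proj_mult_cnj[OF assms(1) X_in_polyRV_deg[OF assms(2)]]
  by (simp add: mult.commute)

lemma poly_growth_Gcomp: "poly_growth h \<Longrightarrow> poly_growth (Gcomp M X n h)"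
  by (cases n) (simp_all add: poly_growth_L2proj poly_growth_diff)

lemma integral_Gcomp:
  assumes "poly_growth h"
  shows "integral\<^sup>L M (Gcomp M X n h) = (if n = 0 then integral\<^sup>L M h else 0)"
  using assms by (cases n) (simp_all add: integral_L2proj integrable_poly_growth poly_growth_L2proj)

lemma poly_growth_mulX: "poly_growth f \<Longrightarrow> poly_growth (mulX X i f)"
  unfolding mulX_def by (rule poly_growth_mult[OF poly_growth_X])

lemma poly_growth_annihOp: "poly_growth p \<Longrightarrow> poly_growth (annihOp M X i p)"
  unfolding annihOp_def
  by (intro poly_growth_sum finite_atLeastAtMost poly_growth_Gcomp poly_growth_mulX)

lemma poly_growth_preservOp: "poly_growth p \<Longrightarrow> poly_growth (preservOp M X i p)"
  unfolding preservOp_def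
  by (intro poly_growth_sum finite_atLeastAtMost poly_growth_Gcomp poly_growth_mulX)

lemma poly_growth_Uop: "poly_growth p \<Longrightarrow> poly_growth (Uop M X i p)"
  unfolding Uop_def
  by (intro poly_growth_add poly_growth_cmult poly_growth_annihOp poly_growth_preservOp)

lemma integral_mulX_Gcomp_1:
  assumes "poly_growth h"
  shows "integral\<^sup>L M (mulX X i (Gcomp M X 1 h))
    = (\<integral>\<omega>. complex_of_real (X i \<omega>) * h \<omega> \<partial>M) - of_real (expectation (X i)) * integral\<^sup>L M h"
proof -
  have "mulX X i (Gcomp M X 1 h) = (\<lambda>\<omega>. complex_of_real (X i \<omega>) * L2proj M (polyRV_deg X 1) h \<omega>
      - complex_of_real (X i \<omega>) * integral\<^sup>L M h)"
    using L2proj_polyRV_deg_0[OF assms] by (simp add: mulX_def right_diff_distrib)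
  then show ?thesis
    using assms poly_growth_X[of i]
    by (simp add: integral_X_mult_L2proj integrable_poly_growth poly_growth_mult poly_growth_L2proj)
qed

text \<open>The components in \<open>G\<^sub>n\<close>, \<open>n > 0\<close>, have mean zero, so only the summand \<open>n = 1\<close>
  survives.\<close>
lemma integral_annihOp:
  assumes "p \<in> polyRV X"
  shows "integral\<^sup>L M (annihOp M X i p)
    = (\<integral>\<omega>. complex_of_real (X i \<omega>) * p \<omega> \<partial>M) - of_real (expectation (X i)) * integral\<^sup>L M p"
proof -
  let ?D = "degRV X p"
  have p: "poly_growth p"
    using assms by (rule poly_growth_polyRV)
  have "integral\<^sup>L M (annihOp M X i p)
      = (\<Sum>n\<in>{1..?D}. integral\<^sup>L M (Gcomp M X (n - 1) (mulX X i (Gcomp M X n p))))"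
    unfolding annihOp_def using p
    by (intro Bochner_Integration.integral_sum integrable_poly_growth poly_growth_Gcomp poly_growth_mulX)
  also have "\<dots> = (\<Sum>n\<in>{1..?D}. if n = 1 then integral\<^sup>L M (mulX X i (Gcomp M X 1 p)) else 0)"
    using p by (intro sum.cong) (auto simp: integral_Gcomp poly_growth_Gcomp poly_growth_mulX)
  also have "\<dots> = (\<integral>\<omega>. complex_of_real (X i \<omega>) * p \<omega> \<partial>M) - of_real (expectation (X i)) * integral\<^sup>L M p"
  proof (cases "?D = 0")
    case True
    then obtain c where "p = (\<lambda>\<omega>. c)"
      using polyRV_deg_degRV[OF assms] polyRV_deg_0_const by metis
    with True show ?thesis
      by (simp add: prob_space)
  next
    case False
    then show ?thesis
      using integral_mulX_Gcomp_1[OF p] by simp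
  qed
  finally show ?thesis .
qed

lemma integral_preservOp:
  assumes "p \<in> polyRV X"
  shows "integral\<^sup>L M (preservOp M X i p) = of_real (expectation (X i)) * integral\<^sup>L M p"
proof -
  have p: "poly_growth p"
    using assms by (rule poly_growth_polyRV)
  have "integral\<^sup>L M (preservOp M X i p)
      = (\<Sum>n\<in>{0..degRV X p}. integral\<^sup>L M (Gcomp M X n (mulX X i (Gcomp M X n p))))"
    unfolding preservOp_def using p
    by (intro Bochner_Integration.integral_sum integrable_poly_growth poly_growth_Gcomp poly_growth_mulX)
  also have "\<dots> = (\<Sum>n\<in>{0..degRV X p}. if n = 0 then integral\<^sup>L M (mulX X i (Gcomp M X 0 p)) else 0)"
    using p by (intro sum.cong) (auto simp: integral_Gcomp poly_growth_Gcomp poly_growth_mulX)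
  also have "\<dots> = of_real (expectation (X i)) * integral\<^sup>L M p"
    using L2proj_polyRV_deg_0[OF p] by (simp add: mulX_def mult.commute)
  finally show ?thesis .
qed

lemma integral_Uop:
  assumes "p \<in> polyRV X"
  shows "integral\<^sup>L M (Uop M X i p)
    = (\<integral>\<omega>. complex_of_real (X i \<omega>) * p \<omega> \<partial>M) - of_real (expectation (X i)) / 2 * integral\<^sup>L M p"
proof -
  have p: "poly_growth p"
    using assms by (rule poly_growth_polyRV)
  have "poly_growth (annihOp M X i p)" "poly_growth (preservOp M X i p)"
    using p by (rule poly_growth_annihOp, rule poly_growth_preservOp)
  then have "integral\<^sup>L M (Uop M X i p)
      = integral\<^sup>L M (annihOp M X i p) + 1 / 2 * integral\<^sup>L M (preservOp M X i p)"
    unfolding Uop_def by (simp add: integrable_poly_growth)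
  then show ?thesis
    using integral_annihOp[OF assms] integral_preservOp[OF assms] by (simp add: field_simps)
qed

lemma Uop_one: "Uop M X i (\<lambda>\<omega>. 1) = (\<lambda>\<omega>. of_real (expectation (X i)) / 2)"
proof -
  have "degRV X (\<lambda>\<omega>. 1) = 0"
    unfolding degRV_def using one_in_polyRV_deg[of X 0] by (simp add: Least_eq_0)
  moreover have "Gcomp M X 0 (\<lambda>\<omega>. 1) = (\<lambda>\<omega>. 1)"
    using L2proj_polyRV_deg_0[OF poly_growth_const, of 1] by (simp add: prob_space)
  moreover have "Gcomp M X 0 (mulX X i (\<lambda>\<omega>. 1)) = (\<lambda>\<omega>. of_real (expectation (X i)))"
    using L2proj_polyRV_deg_0[OF poly_growth_X, of i] by (simp add: mulX_def)
  ultimately show ?thesis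
    by (simp add: Uop_def annihOp_def preservOp_def)
qed

end

section \<open>Moment growth of a Meixner vector\<close>

text \<open>Only the relations \<open>[U\<^sub>i, X\<^sub>i]\<close> with equal indices enter the proof.\<close>
locale diagonal_Meixner =
  finite_moment_vector M X for M :: "'a measure" and X :: "'d::finite \<Rightarrow> 'a \<Rightarrow> real" +
  fixes \<alpha> :: "'d \<Rightarrow> 'd \<Rightarrow> real" and \<beta> :: "'d \<Rightarrow> real"
  assumes diagonal_commutator: "\<And>i f. f \<in> polyRV X \<Longrightarrow>
    AE \<omega> in M. Uop M X i (mulX X i f) \<omega> - complex_of_real (X i \<omega>) * Uop M X i f \<omega>
      = (\<Sum>k\<in>UNIV. complex_of_real (\<alpha> i k) * complex_of_real (X k \<omega>) * f \<omega>) + complex_of_real (\<beta> i) * f \<omega>"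
begin

definition commutator_coeff :: "'d \<Rightarrow> 'a \<Rightarrow> real" where
  "commutator_coeff i \<omega> = (\<Sum>k\<in>UNIV. \<alpha> i k * X k \<omega>) + \<beta> i"

lemma commutator_coeff_measurable [measurable]: "commutator_coeff i \<in> borel_measurable M"
  unfolding commutator_coeff_def by measurable

lemma poly_growth_commutator_coeff: "poly_growth (\<lambda>\<omega>. complex_of_real (commutator_coeff i \<omega>))"
  unfolding commutator_coeff_def of_real_add of_real_sum of_real_mult
  by (intro poly_growth_add poly_growth_sum poly_growth_cmult poly_growth_X poly_growth_const) auto

lemma Uop_X_power:
  "AE \<omega> in M. Uop M X i (\<lambda>\<omega>. complex_of_real (X i \<omega> ^ n)) \<omega>
     = complex_of_real (real n * commutator_coeff i \<omega> * X i \<omega> ^ (n - 1) + expectation (X i) / 2 * X i \<omega> ^ n)"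
proof (induction n)
  case 0
  show ?case
    by (simp add: Uop_one)
next
  case (Suc n)
  have "mulX X i (\<lambda>\<omega>. complex_of_real (X i \<omega> ^ n)) = (\<lambda>\<omega>. complex_of_real (X i \<omega> ^ Suc n))"
    by (simp add: mulX_def)
  then have "AE \<omega> in M. Uop M X i (\<lambda>\<omega>. complex_of_real (X i \<omega> ^ Suc n)) \<omega>
      - complex_of_real (X i \<omega>) * Uop M X i (\<lambda>\<omega>. complex_of_real (X i \<omega> ^ n)) \<omega>
      = complex_of_real (commutator_coeff i \<omega> * X i \<omega> ^ n)"
    using diagonal_commutator[OF X_power_in_polyRV, of i i n]
    by (simp add: commutator_coeff_def sum_distrib_right distrib_right)
  then show ?case
    using Suc.IH
  proof eventually_elim
    case (elim \<omega>)
    then show ?case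
      by (cases n) (simp_all add: algebra_simps)
  qed
qed

lemma moment_recursion:
  "expectation (\<lambda>\<omega>. X i \<omega> ^ Suc n) = expectation (X i) * expectation (\<lambda>\<omega>. X i \<omega> ^ n)
     + real n * expectation (\<lambda>\<omega>. commutator_coeff i \<omega> * X i \<omega> ^ (n - 1))"
proof -
  have int: "integrable M (\<lambda>\<omega>. X i \<omega> ^ n)" "integrable M (\<lambda>\<omega>. commutator_coeff i \<omega> * X i \<omega> ^ (n - 1))"
    using poly_growth_power[OF poly_growth_X] poly_growth_mult[OF poly_growth_commutator_coeff
        poly_growth_power[OF poly_growth_X]]
    by (auto intro!: integrable_of_real_poly_growth)
  have "complex_of_real (expectation (\<lambda>\<omega>. X i \<omega> ^ Suc n) - expectation (X i) / 2 * expectation (\<lambda>\<omega>. X i \<omega> ^ n))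
      = integral\<^sup>L M (Uop M X i (\<lambda>\<omega>. complex_of_real (X i \<omega> ^ n)))"
  proof -
    have "integral\<^sup>L M (Uop M X i (\<lambda>\<omega>. complex_of_real (X i \<omega> ^ n)))
        = (\<integral>\<omega>. complex_of_real (X i \<omega>) * complex_of_real (X i \<omega> ^ n) \<partial>M)
          - of_real (expectation (X i)) / 2 * (\<integral>\<omega>. complex_of_real (X i \<omega> ^ n) \<partial>M)"
      by (rule integral_Uop[OF X_power_in_polyRV])
    also have "\<dots> = of_real (expectation (\<lambda>\<omega>. X i \<omega> ^ Suc n))
        - of_real (expectation (X i)) / 2 * of_real (expectation (\<lambda>\<omega>. X i \<omega> ^ n))"
      by (simp only: of_real_mult[symmetric] power_Suc integral_complex_of_real)
    finally show ?thesis
      by simp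
  qed
  also have "\<dots> = (\<integral>\<omega>. complex_of_real (real n * commutator_coeff i \<omega> * X i \<omega> ^ (n - 1)
      + expectation (X i) / 2 * X i \<omega> ^ n) \<partial>M)"
  proof (rule integral_cong_AE)
    show "Uop M X i (\<lambda>\<omega>. complex_of_real (X i \<omega> ^ n)) \<in> borel_measurable M"
      by (intro poly_growth_measurable poly_growth_Uop poly_growth_X_power)
    show "AE \<omega> in M. Uop M X i (\<lambda>\<omega>. complex_of_real (X i \<omega> ^ n)) \<omega>
        = complex_of_real (real n * commutator_coeff i \<omega> * X i \<omega> ^ (n - 1) + expectation (X i) / 2 * X i \<omega> ^ n)"
      by (rule Uop_X_power)
  qed measurable
  also have "\<dots> = complex_of_real (\<integral>\<omega>. real n * commutator_coeff i \<omega> * X i \<omega> ^ (n - 1)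
      + expectation (X i) / 2 * X i \<omega> ^ n \<partial>M)"
    by (rule integral_complex_of_real)
  also have "\<dots> = complex_of_real (real n * expectation (\<lambda>\<omega>. commutator_coeff i \<omega> * X i \<omega> ^ (n - 1))
      + expectation (X i) / 2 * expectation (\<lambda>\<omega>. X i \<omega> ^ n))"
    using int by (simp add: mult.assoc)
  finally show ?thesis
    unfolding of_real_eq_iff by (simp add: field_simps)
qed

definition coeff_bound :: real where
  "coeff_bound = 1 + (\<Sum>i\<in>UNIV. \<bar>expectation (X i)\<bar>) + (\<Sum>i\<in>UNIV. \<bar>\<beta> i\<bar>)
     + (\<Sum>i\<in>UNIV. \<Sum>k\<in>UNIV. \<bar>\<alpha> i k\<bar>)"

lemma coeff_bound_ge:
  "1 \<le> coeff_bound" "\<bar>expectation (X i)\<bar> \<le> coeff_bound" "\<bar>\<beta> i\<bar> \<le> coeff_bound"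
  "(\<Sum>k\<in>UNIV. \<bar>\<alpha> i k\<bar>) \<le> coeff_bound"
proof -
  have "\<bar>expectation (X i)\<bar> \<le> (\<Sum>i\<in>UNIV. \<bar>expectation (X i)\<bar>)" "\<bar>\<beta> i\<bar> \<le> (\<Sum>i\<in>UNIV. \<bar>\<beta> i\<bar>)"
    "(\<Sum>k\<in>UNIV. \<bar>\<alpha> i k\<bar>) \<le> (\<Sum>i\<in>UNIV. \<Sum>k\<in>UNIV. \<bar>\<alpha> i k\<bar>)"
    by (rule member_le_sum[where f="\<lambda>i. \<bar>expectation (X i)\<bar>"], simp_all,
        rule member_le_sum[where f="\<lambda>i. \<bar>\<beta> i\<bar>"], simp_all,
        rule member_le_sum[where f="\<lambda>i. \<Sum>k\<in>UNIV. \<bar>\<alpha> i k\<bar>"], simp_all add: sum_nonneg)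
  moreover have "0 \<le> (\<Sum>i\<in>UNIV. \<bar>expectation (X i)\<bar>)" "0 \<le> (\<Sum>i\<in>UNIV. \<bar>\<beta> i\<bar>)"
    "0 \<le> (\<Sum>i\<in>UNIV. \<Sum>k\<in>UNIV. \<bar>\<alpha> i k\<bar>)"
    by (simp_all add: sum_nonneg)
  ultimately show "1 \<le> coeff_bound" "\<bar>expectation (X i)\<bar> \<le> coeff_bound" "\<bar>\<beta> i\<bar> \<le> coeff_bound"
    "(\<Sum>k\<in>UNIV. \<bar>\<alpha> i k\<bar>) \<le> coeff_bound"
    unfolding coeff_bound_def by linarith+
qed

lemma abs_commutator_coeff_le: "\<bar>commutator_coeff i \<omega>\<bar> \<le> coeff_bound * (1 + l1_normRV X \<omega>)"
proof -
  have "\<bar>commutator_coeff i \<omega>\<bar> \<le> (\<Sum>k\<in>UNIV. \<bar>\<alpha> i k\<bar> * \<bar>X k \<omega>\<bar>) + \<bar>\<beta> i\<bar>"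
    unfolding commutator_coeff_def
    by (rule order_trans[OF abs_triangle_ineq add_right_mono[OF order_trans[OF sum_abs]]])
      (simp add: abs_mult)
  also have "\<dots> \<le> (\<Sum>k\<in>UNIV. \<bar>\<alpha> i k\<bar>) * l1_normRV X \<omega> + \<bar>\<beta> i\<bar>"
    unfolding sum_distrib_right by (intro add_right_mono sum_mono mult_left_mono abs_le_l1_normRV) auto
  also have "\<dots> \<le> coeff_bound * l1_normRV X \<omega> + coeff_bound"
    using coeff_bound_ge(3,4)[of i] l1_normRV_nonneg[of X \<omega>] by (intro add_mono mult_right_mono) auto
  finally show ?thesis
    by (simp add: algebra_simps)
qed

definition abs_moment :: "nat \<Rightarrow> real" where
  "abs_moment r = expectation (\<lambda>\<omega>. \<Sum>i\<in>UNIV. \<bar>X i \<omega>\<bar> ^ r)"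

lemma integrable_sum_abs_X_power: "integrable M (\<lambda>\<omega>. \<Sum>i\<in>UNIV. \<bar>X i \<omega>\<bar> ^ r)"
  by (simp add: integrable_abs_X_power)

lemma abs_moment_nonneg: "0 \<le> abs_moment r"
  unfolding abs_moment_def by (simp add: sum_nonneg)

lemma abs_moment_eq_sum: "abs_moment r = (\<Sum>i\<in>UNIV. expectation (\<lambda>\<omega>. \<bar>X i \<omega>\<bar> ^ r))"
  unfolding abs_moment_def by (simp add: integrable_abs_X_power)

lemma expectation_abs_X_power_even_le:
  assumes "even n"
  shows "expectation (\<lambda>\<omega>. \<bar>X i \<omega>\<bar> ^ Suc (Suc n))
    \<le> expectation (\<lambda>\<omega>. coeff_bound * \<bar>X i \<omega>\<bar> ^ Suc n
         + real (Suc n) * (coeff_bound * (1 + l1_normRV X \<omega>) * \<bar>X i \<omega>\<bar> ^ n))"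
proof -
  let ?G = "\<lambda>\<omega>. coeff_bound * (1 + l1_normRV X \<omega>) * \<bar>X i \<omega>\<bar> ^ n"
  have int_G: "integrable M ?G"
    using integrable_of_real_poly_growth[OF poly_growth_of_real_mult[OF poly_growth_l1_normRV
          poly_growth_of_real_power[OF poly_growth_abs_X]]] integrable_abs_X_power
    by (simp add: distrib_left distrib_right mult.assoc)
  have int_L: "integrable M (\<lambda>\<omega>. commutator_coeff i \<omega> * X i \<omega> ^ n)"
    by (intro integrable_of_real_poly_growth poly_growth_of_real_mult poly_growth_commutator_coeff
        poly_growth_X_power)
  have "expectation (X i) * expectation (\<lambda>\<omega>. X i \<omega> ^ Suc n)
      \<le> \<bar>expectation (X i)\<bar> * \<bar>expectation (\<lambda>\<omega>. X i \<omega> ^ Suc n)\<bar>"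
    by (simp only: abs_mult[symmetric] abs_ge_self)
  also have "\<dots> \<le> coeff_bound * expectation (\<lambda>\<omega>. \<bar>X i \<omega>\<bar> ^ Suc n)"
    using coeff_bound_ge(2)[of i] coeff_bound_ge(1)
      integral_abs_bound[of M "\<lambda>\<omega>. X i \<omega> ^ Suc n", unfolded power_abs]
    by (intro mult_mono) auto
  finally have first: "expectation (X i) * expectation (\<lambda>\<omega>. X i \<omega> ^ Suc n)
      \<le> coeff_bound * expectation (\<lambda>\<omega>. \<bar>X i \<omega>\<bar> ^ Suc n)" .
  have second: "expectation (\<lambda>\<omega>. commutator_coeff i \<omega> * X i \<omega> ^ n) \<le> expectation ?G"
  proof (rule integral_mono[OF int_L int_G])
    fix \<omega>
    have "commutator_coeff i \<omega> * X i \<omega> ^ n \<le> \<bar>commutator_coeff i \<omega>\<bar> * \<bar>X i \<omega>\<bar> ^ n"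
      by (simp only: power_abs[symmetric] abs_mult[symmetric] abs_ge_self)
    then show "commutator_coeff i \<omega> * X i \<omega> ^ n \<le> ?G \<omega>"
      using mult_right_mono[OF abs_commutator_coeff_le[of i \<omega>], of "\<bar>X i \<omega>\<bar> ^ n"] by simp
  qed
  have "\<bar>X i \<omega>\<bar> ^ Suc (Suc n) = X i \<omega> ^ Suc (Suc n)" for \<omega>
    using assms by (intro power_even_abs) simp
  then have "expectation (\<lambda>\<omega>. \<bar>X i \<omega>\<bar> ^ Suc (Suc n)) = expectation (\<lambda>\<omega>. X i \<omega> ^ Suc (Suc n))"
    by (simp only:)
  also have "\<dots> = expectation (X i) * expectation (\<lambda>\<omega>. X i \<omega> ^ Suc n)
      + real (Suc n) * expectation (\<lambda>\<omega>. commutator_coeff i \<omega> * X i \<omega> ^ n)"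
    using moment_recursion[of i "Suc n"] by simp
  also have "\<dots> \<le> coeff_bound * expectation (\<lambda>\<omega>. \<bar>X i \<omega>\<bar> ^ Suc n) + real (Suc n) * expectation ?G"
    using first second by (intro add_mono mult_left_mono) auto
  also have "\<dots> = expectation (\<lambda>\<omega>. coeff_bound * \<bar>X i \<omega>\<bar> ^ Suc n + real (Suc n) * ?G \<omega>)"
    using int_G integrable_abs_X_power by (simp del: power_Suc of_nat_Suc)
  finally show ?thesis .
qed

lemma abs_moment_even_Suc_le:
  "abs_moment (Suc (Suc (2 * q)))
    \<le> real (Suc (2 * q)) * (1 + 2 * real CARD('d)) * coeff_bound
       * (abs_moment (2 * q) + abs_moment (Suc (2 * q)))"
proof -
  let ?F = "\<lambda>i \<omega>. coeff_bound * \<bar>X i \<omega>\<bar> ^ Suc (2 * q)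
    + real (Suc (2 * q)) * (coeff_bound * (1 + l1_normRV X \<omega>) * \<bar>X i \<omega>\<bar> ^ (2 * q))"
  have int_F: "integrable M (?F i)" for i
    using integrable_of_real_poly_growth[OF poly_growth_of_real_mult[OF poly_growth_l1_normRV
          poly_growth_of_real_power[OF poly_growth_abs_X]]] integrable_abs_X_power
    by (simp add: distrib_left distrib_right mult.assoc del: power_Suc)
  have "abs_moment (Suc (Suc (2 * q))) \<le> (\<Sum>i\<in>UNIV. expectation (?F i))"
    unfolding abs_moment_eq_sum by (intro sum_mono expectation_abs_X_power_even_le) simp
  also have "\<dots> = expectation (\<lambda>\<omega>. \<Sum>i\<in>UNIV. ?F i \<omega>)"
    using int_F by (rule Bochner_Integration.integral_sum[symmetric])
  also have "\<dots> \<le> expectation (\<lambda>\<omega>. real (Suc (2 * q)) * (1 + 2 * real CARD('d)) * coeff_bound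
      * ((\<Sum>i\<in>UNIV. \<bar>X i \<omega>\<bar> ^ (2 * q)) + (\<Sum>i\<in>UNIV. \<bar>X i \<omega>\<bar> ^ Suc (2 * q))))"
  proof (rule integral_mono)
    show "integrable M (\<lambda>\<omega>. \<Sum>i\<in>UNIV. ?F i \<omega>)"
      using int_F by (rule Bochner_Integration.integrable_sum)
    show "(\<Sum>i\<in>UNIV. ?F i \<omega>) \<le> real (Suc (2 * q)) * (1 + 2 * real CARD('d)) * coeff_bound
        * ((\<Sum>i\<in>UNIV. \<bar>X i \<omega>\<bar> ^ (2 * q)) + (\<Sum>i\<in>UNIV. \<bar>X i \<omega>\<bar> ^ Suc (2 * q)))" for \<omega>
      using sum_abs_power_growth_le[of coeff_bound "\<lambda>i. X i \<omega>" "2 * q"] coeff_bound_ge(1)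
      by (simp only: l1_normRV_def)
  qed (use integrable_sum_abs_X_power in \<open>simp del: power_Suc\<close>)
  also have "\<dots> = real (Suc (2 * q)) * (1 + 2 * real CARD('d)) * coeff_bound
       * (abs_moment (2 * q) + abs_moment (Suc (2 * q)))"
    unfolding abs_moment_def using integrable_sum_abs_X_power by (simp del: power_Suc)
  finally show ?thesis .
qed

lemma abs_moment_odd_le: "2 * c * abs_moment (Suc n) \<le> abs_moment (Suc (Suc n)) + c\<^sup>2 * abs_moment n"
proof -
  have "2 * c * abs_moment (Suc n) = expectation (\<lambda>\<omega>. \<Sum>i\<in>UNIV. 2 * c * \<bar>X i \<omega>\<bar> ^ Suc n)"
    unfolding abs_moment_def by (simp only: integral_mult_right_zero[symmetric] sum_distrib_left)
  also have "\<dots> \<le> expectation (\<lambda>\<omega>. \<Sum>i\<in>UNIV. \<bar>X i \<omega>\<bar> ^ Suc (Suc n) + c\<^sup>2 * \<bar>X i \<omega>\<bar> ^ n)"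
    using integrable_abs_X_power
    by (intro integral_mono sum_mono two_mult_power_Suc_le) (auto simp del: power_Suc)
  also have "\<dots> = abs_moment (Suc (Suc n)) + c\<^sup>2 * abs_moment n"
    unfolding abs_moment_def using integrable_abs_X_power
    by (simp add: sum.distrib sum_distrib_left del: power_Suc)
  finally show ?thesis .
qed

definition moment_growth :: real where
  "moment_growth = 12 * ((1 + 2 * real CARD('d)) * coeff_bound)\<^sup>2"

lemma one_le_moment_growth: "1 \<le> moment_growth"
proof -
  have "1 \<le> (1 + 2 * real CARD('d)) * coeff_bound"
    using coeff_bound_ge(1) mult_mono[of 1 "1 + 2 * real CARD('d)" 1 coeff_bound] by simp
  then have "1 \<le> ((1 + 2 * real CARD('d)) * coeff_bound)\<^sup>2"
    by (rule one_le_power)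
  then show ?thesis
    unfolding moment_growth_def by linarith
qed

text \<open>The odd moment in \<open>abs_moment_even_Suc_le\<close> is eliminated with \<open>abs_moment_odd_le\<close>.\<close>
lemma abs_moment_even_step: "abs_moment (2 * Suc q) \<le> moment_growth * (real q + 1)\<^sup>2 * abs_moment (2 * q)"
proof -
  define c where "c = real (Suc (2 * q)) * (1 + 2 * real CARD('d)) * coeff_bound"
  have "1 \<le> c"
  proof -
    have "1 \<le> real (Suc (2 * q)) * (1 + 2 * real CARD('d))"
      using mult_mono[of 1 "real (Suc (2 * q))" 1 "1 + 2 * real CARD('d)"] by simp
    then show ?thesis
      unfolding c_def using coeff_bound_ge(1)
        mult_mono[of 1 "real (Suc (2 * q)) * (1 + 2 * real CARD('d))" 1 coeff_bound]
      by simp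
  qed
  have "abs_moment (Suc (Suc (2 * q))) \<le> 2 * c * abs_moment (2 * q) + c\<^sup>2 * abs_moment (2 * q)"
    using abs_moment_even_Suc_le[of q] abs_moment_odd_le[of c "2 * q"] unfolding c_def
    by (simp add: algebra_simps del: power_Suc)
  also have "\<dots> \<le> 3 * c\<^sup>2 * abs_moment (2 * q)"
  proof -
    have "c \<le> c\<^sup>2"
      using \<open>1 \<le> c\<close> mult_right_mono[of 1 c c] by (simp add: power2_eq_square)
    then have "c * abs_moment (2 * q) \<le> c\<^sup>2 * abs_moment (2 * q)"
      using abs_moment_nonneg by (rule mult_right_mono)
    then show ?thesis
      by linarith
  qed
  also have "\<dots> \<le> 3 * (2 * (real q + 1) * ((1 + 2 * real CARD('d)) * coeff_bound))\<^sup>2 * abs_moment (2 * q)"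
    unfolding c_def using abs_moment_nonneg[of "2 * q"] coeff_bound_ge(1)
    by (intro mult_right_mono mult_left_mono power_mono) auto
  also have "\<dots> = moment_growth * (real q + 1)\<^sup>2 * abs_moment (2 * q)"
    unfolding moment_growth_def by (simp add: power2_eq_square algebra_simps)
  finally show ?thesis
    by simp
qed

lemma abs_moment_even_le: "abs_moment (2 * q) \<le> real CARD('d) * moment_growth ^ q * (fact q)\<^sup>2"
proof (induction q)
  case 0
  show ?case
    by (simp add: abs_moment_def prob_space)
next
  case (Suc q)
  have "abs_moment (2 * Suc q) \<le> moment_growth * (real q + 1)\<^sup>2 * abs_moment (2 * q)"
    by (rule abs_moment_even_step)
  also have "\<dots> \<le> moment_growth * (real q + 1)\<^sup>2 * (real CARD('d) * moment_growth ^ q * (fact q)\<^sup>2)"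
    using Suc.IH one_le_moment_growth by (intro mult_left_mono) auto
  also have "\<dots> = real CARD('d) * moment_growth ^ Suc q * ((real q + 1) * fact q)\<^sup>2"
    by (simp add: power_mult_distrib mult_ac)
  also have "(real q + 1) * fact q = (fact (Suc q) :: real)"
    by simp
  finally show ?case .
qed

lemma exists_integrable_exp_l1_normRV: "\<exists>\<tau>>0. integrable M (\<lambda>\<omega>. exp (\<tau> * l1_normRV X \<omega>))"
proof -
  let ?d = "real CARD('d)"
  define \<sigma> where "\<sigma> = 1 / (2 * moment_growth)"
  have "0 < \<sigma>"
    unfolding \<sigma>_def using one_le_moment_growth by simp
  have "\<sigma>\<^sup>2 * moment_growth \<le> 1 / 4"
    unfolding \<sigma>_def using one_le_moment_growth by (simp add: power2_eq_square field_simps)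
  have "integrable M (\<lambda>\<omega>. exp (\<sigma> * \<bar>X i \<omega>\<bar>))" for i
  proof (rule integrable_exp_abs_if_even_moments)
    show "integrable M (\<lambda>\<omega>. X i \<omega> ^ (2 * q))" for q
      using integrable_abs_X_power[of i "2 * q"] by (simp add: power_even_abs)
    show "expectation (\<lambda>\<omega>. X i \<omega> ^ (2 * q)) \<le> ?d * moment_growth ^ q * (fact q)\<^sup>2" for q
    proof -
      have "expectation (\<lambda>\<omega>. X i \<omega> ^ (2 * q)) = expectation (\<lambda>\<omega>. \<bar>X i \<omega>\<bar> ^ (2 * q))"
        by (simp add: power_even_abs)
      also have "\<dots> \<le> (\<Sum>i\<in>UNIV. expectation (\<lambda>\<omega>. \<bar>X i \<omega>\<bar> ^ (2 * q)))"
        by (rule member_le_sum) auto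
      finally show ?thesis
        using abs_moment_even_le[of q] by (simp add: abs_moment_eq_sum)
    qed
  qed (use \<open>0 < \<sigma>\<close> \<open>\<sigma>\<^sup>2 * moment_growth \<le> 1 / 4\<close> one_le_moment_growth in auto)
  then have "integrable M (\<lambda>\<omega>. \<Sum>i\<in>UNIV. exp (\<sigma> / ?d * (?d * \<bar>X i \<omega>\<bar>)))"
    by simp
  then have "integrable M (\<lambda>\<omega>. exp (\<sigma> / ?d * l1_normRV X \<omega>))"
  proof (rule integrable_dominated)
    show "norm (exp (\<sigma> / ?d * l1_normRV X \<omega>)) \<le> (\<Sum>i\<in>UNIV. exp (\<sigma> / ?d * (?d * \<bar>X i \<omega>\<bar>)))" for \<omega>
    proof -
      have "exp (\<sigma> / ?d * (\<Sum>i\<in>UNIV. \<bar>X i \<omega>\<bar>)) \<le> (\<Sum>i\<in>UNIV. exp (\<sigma> / ?d * (?d * \<bar>X i \<omega>\<bar>)))"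
        using \<open>0 < \<sigma>\<close>
        by (intro mono_sum_le_sum_mono[where g="\<lambda>x. exp (\<sigma> / ?d * x)"])
          (auto simp: mono_def intro!: divide_right_mono mult_left_mono)
      then show ?thesis
        unfolding l1_normRV_def by simp
    qed
  qed measurable
  then show ?thesis
    using \<open>0 < \<sigma>\<close> by (intro exI[of _ "\<sigma> / ?d"]) auto
qed

end

section \<open>Differentiability of the Laplace transform\<close>

definition innerRV :: "('d::finite \<Rightarrow> 'a \<Rightarrow> real) \<Rightarrow> real^'d \<Rightarrow> 'a \<Rightarrow> real" where
  "innerRV X t \<omega> = (\<Sum>i\<in>UNIV. t $ i * X i \<omega>)"

lemma borel_measurable_innerRV [measurable]:
  assumes [measurable]: "\<And>i. X i \<in> borel_measurable M"
  shows "innerRV X t \<in> borel_measurable M"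
  unfolding innerRV_def by measurable

lemma abs_innerRV_le: "\<bar>innerRV X t \<omega>\<bar> \<le> norm t * l1_normRV X \<omega>"
proof -
  have "\<bar>innerRV X t \<omega>\<bar> \<le> (\<Sum>i\<in>UNIV. \<bar>t $ i\<bar> * \<bar>X i \<omega>\<bar>)"
    unfolding innerRV_def using sum_abs[of "\<lambda>i. t $ i * X i \<omega>" UNIV] by (simp add: abs_mult)
  also have "\<dots> \<le> (\<Sum>i\<in>UNIV. norm t * \<bar>X i \<omega>\<bar>)"
    by (intro sum_mono mult_right_mono component_le_norm_cart) simp
  finally show ?thesis
    by (simp add: l1_normRV_def sum_distrib_left)
qed

lemma innerRV_le: "norm t \<le> r \<Longrightarrow> innerRV X t \<omega> \<le> r * l1_normRV X \<omega>"
  using abs_innerRV_le[of X t \<omega>] mult_right_mono[of "norm t" r "l1_normRV X \<omega>"] l1_normRV_nonneg[of X \<omega>]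
  by linarith

lemma innerRV_add_axis: "innerRV X (t + u *\<^sub>R axis j 1) \<omega> = innerRV X t \<omega> + u * X j \<omega>"
proof -
  have "innerRV X (t + u *\<^sub>R axis j 1) \<omega> = (\<Sum>i\<in>UNIV. t $ i * X i \<omega> + (if i = j then u * X j \<omega> else 0))"
    unfolding innerRV_def by (intro sum.cong) (auto simp: axis_def algebra_simps)
  then show ?thesis
    by (simp add: innerRV_def sum.distrib)
qed

lemma innerRV_diff: "innerRV X t \<omega> - innerRV X t' \<omega> = innerRV X (t - t') \<omega>"
  unfolding innerRV_def by (simp add: sum_subtractf algebra_simps)

lemma laplaceRV_eq_integral_innerRV: "laplaceRV M X t = (\<integral>\<omega>. exp (innerRV X t \<omega>) \<partial>M)"
  unfolding laplaceRV_def innerRV_def ..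

lemma abs_mult_X_le: "\<bar>X i \<omega> * X j \<omega>\<bar> \<le> l1_normRV X \<omega> * l1_normRV X \<omega>"
  unfolding abs_mult by (intro mult_mono abs_le_l1_normRV) (auto simp: l1_normRV_nonneg)

lemma abs_mult_X_le_cube: "\<bar>X i \<omega> * X j \<omega>\<bar> \<le> (1 + l1_normRV X \<omega>) ^ 3"
proof -
  let ?S = "l1_normRV X \<omega>"
  have "?S * ?S \<le> (1 + ?S) * (1 + ?S)"
    using l1_normRV_nonneg[of X \<omega>] by (intro mult_mono) auto
  also have "\<dots> \<le> (1 + ?S) * (1 + ?S) * (1 + ?S)"
    using l1_normRV_nonneg[of X \<omega>] mult_left_mono[of 1 "1 + ?S" "(1 + ?S) * (1 + ?S)"] by simp
  finally show ?thesis
    using abs_mult_X_le[of X i \<omega> j] by (simp add: power3_eq_cube)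
qed

locale exponential_moment =
  fixes M :: "'a measure" and X :: "'d::finite \<Rightarrow> 'a \<Rightarrow> real" and \<tau> :: real
  assumes X_measurable [measurable]: "\<And>i. X i \<in> borel_measurable M"
    and \<tau>_pos: "0 < \<tau>"
    and integrable_exp_l1_normRV: "integrable M (\<lambda>\<omega>. exp (\<tau> * l1_normRV X \<omega>))"
begin

definition dominating :: "'a \<Rightarrow> real" where
  "dominating \<omega> = (1 + 6 / \<tau>) ^ 3 * exp (\<tau> * l1_normRV X \<omega>)"

lemma integrable_dominating: "integrable M dominating"
  unfolding dominating_def using integrable_exp_l1_normRV by simp

text \<open>The constant comes from \<open>1 + S \<le> (1 + 6/\<tau>) exp (\<tau> S / 6)\<close>: cubing it absorbs the
  polynomial factor into half of the exponential moment.\<close>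
lemma cube_exp_le_dominating:
  "(1 + l1_normRV X \<omega>) ^ 3 * exp (\<tau> / 2 * l1_normRV X \<omega>) \<le> dominating \<omega>"
proof -
  let ?S = "l1_normRV X \<omega>" and ?e = "exp (\<tau> / 6 * l1_normRV X \<omega>)"
  have "\<tau> / 6 * ?S \<le> ?e"
    using exp_ge_add_one_self[of "\<tau> / 6 * ?S"] by linarith
  then have "?S \<le> 6 / \<tau> * ?e"
    using \<tau>_pos by (simp add: field_simps)
  moreover have "1 \<le> ?e"
    using \<tau>_pos l1_normRV_nonneg[of X \<omega>] by simp
  ultimately have "1 + ?S \<le> ?e + 6 / \<tau> * ?e"
    by linarith
  then have "1 + ?S \<le> (1 + 6 / \<tau>) * ?e"
    by (simp only: distrib_right mult_1)
  then have "(1 + ?S) ^ 3 \<le> ((1 + 6 / \<tau>) * ?e) ^ 3"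
    using l1_normRV_nonneg[of X \<omega>] by (intro power_mono) auto
  also have "\<dots> = (1 + 6 / \<tau>) ^ 3 * exp (\<tau> / 2 * ?S)"
    by (simp add: power_mult_distrib exp_of_nat_mult[symmetric])
  finally have "(1 + ?S) ^ 3 * exp (\<tau> / 2 * ?S) \<le> (1 + 6 / \<tau>) ^ 3 * exp (\<tau> / 2 * ?S) * exp (\<tau> / 2 * ?S)"
    by (intro mult_right_mono) auto
  also have "\<dots> = dominating \<omega>"
    by (simp add: dominating_def mult.assoc exp_add[symmetric])
  finally show ?thesis .
qed

lemma mult_exp_innerRV_le_dominating:
  assumes "\<bar>h\<bar> \<le> (1 + l1_normRV X \<omega>) ^ 3" "norm t \<le> \<tau> / 4" "e \<le> \<tau> / 4 * l1_normRV X \<omega>"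
  shows "\<bar>h\<bar> * exp (innerRV X t \<omega> + e) \<le> dominating \<omega>"
proof -
  have "exp (innerRV X t \<omega> + e) \<le> exp (\<tau> / 2 * l1_normRV X \<omega>)"
    using innerRV_le[OF assms(2), of X \<omega>] assms(3) by simp
  then have "\<bar>h\<bar> * exp (innerRV X t \<omega> + e) \<le> (1 + l1_normRV X \<omega>) ^ 3 * exp (\<tau> / 2 * l1_normRV X \<omega>)"
    using assms(1) l1_normRV_nonneg[of X \<omega>] by (intro mult_mono) auto
  also have "\<dots> \<le> dominating \<omega>"
    by (rule cube_exp_le_dominating)
  finally show ?thesis .
qed

lemma integrable_mult_exp_innerRV:
  assumes [measurable]: "h \<in> borel_measurable M"
    and "\<And>\<omega>. \<bar>h \<omega>\<bar> \<le> (1 + l1_normRV X \<omega>) ^ 3" "norm t \<le> \<tau> / 4"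
  shows "integrable M (\<lambda>\<omega>. h \<omega> * exp (innerRV X t \<omega>))"
proof (rule integrable_dominated[OF integrable_dominating])
  show "norm (h \<omega> * exp (innerRV X t \<omega>)) \<le> dominating \<omega>" for \<omega>
    using mult_exp_innerRV_le_dominating[OF assms(2,3), of 0] \<tau>_pos l1_normRV_nonneg[of X \<omega>]
    by (simp add: abs_mult)
qed measurable

lemma has_derivative_axis_integral_exp_innerRV:
  assumes [measurable]: "g \<in> borel_measurable M"
    and "\<And>\<omega>. \<bar>g \<omega>\<bar> \<le> 1 + l1_normRV X \<omega>" "norm t \<le> \<tau> / 4"
  shows "((\<lambda>u. \<integral>\<omega>. g \<omega> * exp (innerRV X (t + u *\<^sub>R axis j 1) \<omega>) \<partial>M) has_real_derivative
      (\<integral>\<omega>. g \<omega> * X j \<omega> * exp (innerRV X t \<omega>) \<partial>M)) (at 0)"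
  unfolding innerRV_add_axis
proof (rule has_real_derivative_integral_exp[OF _ _ _ _ integrable_dominating])
  show "0 < \<tau> / 4"
    using \<tau>_pos by simp
  fix \<omega>
  have "\<bar>g \<omega>\<bar> * (1 + \<bar>X j \<omega>\<bar>)\<^sup>2 \<le> (1 + l1_normRV X \<omega>) * (1 + l1_normRV X \<omega>)\<^sup>2"
    using assms(2)[of \<omega>] abs_le_l1_normRV[of X j \<omega>] by (intro mult_mono power_mono) auto
  then have g: "\<bar>\<bar>g \<omega>\<bar> * (1 + \<bar>X j \<omega>\<bar>)\<^sup>2\<bar> \<le> (1 + l1_normRV X \<omega>) ^ 3"
    by (simp add: power3_eq_cube power2_eq_square)
  have e: "\<tau> / 4 * \<bar>X j \<omega>\<bar> \<le> \<tau> / 4 * l1_normRV X \<omega>"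
    using \<tau>_pos abs_le_l1_normRV by (intro mult_left_mono) auto
  show "\<bar>g \<omega>\<bar> * (1 + \<bar>X j \<omega>\<bar>)\<^sup>2 * exp (innerRV X t \<omega> + \<tau> / 4 * \<bar>X j \<omega>\<bar>) \<le> dominating \<omega>"
    using mult_exp_innerRV_le_dominating[OF g assms(3) e] by simp
qed measurable

lemma laplaceRV_has_axis_derivative:
  assumes "norm t \<le> \<tau> / 4"
  shows "((\<lambda>u. laplaceRV M X (t + u *\<^sub>R axis i 1)) has_real_derivative
      (\<integral>\<omega>. X i \<omega> * exp (innerRV X t \<omega>) \<partial>M)) (at 0)"
  using has_derivative_axis_integral_exp_innerRV[of "\<lambda>_. 1" t i] assms l1_normRV_nonneg[of X]
  by (simp add: laplaceRV_eq_integral_innerRV)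

lemma partialD_laplaceRV:
  "norm t \<le> \<tau> / 4 \<Longrightarrow> partialD i (laplaceRV M X) t = (\<integral>\<omega>. X i \<omega> * exp (innerRV X t \<omega>) \<partial>M)"
  unfolding partialD_def by (rule DERIV_imp_deriv[OF laplaceRV_has_axis_derivative])

lemma partialD_laplaceRV_has_axis_derivative:
  assumes "norm t < \<tau> / 4"
  shows "((\<lambda>u. partialD i (laplaceRV M X) (t + u *\<^sub>R axis j 1)) has_real_derivative
      (\<integral>\<omega>. X i \<omega> * X j \<omega> * exp (innerRV X t \<omega>) \<partial>M)) (at 0)"
proof -
  have "\<forall>\<^sub>F u in nhds 0. partialD i (laplaceRV M X) (t + u *\<^sub>R axis j 1)
      = (\<integral>\<omega>. X i \<omega> * exp (innerRV X (t + u *\<^sub>R axis j 1) \<omega>) \<partial>M)"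
    unfolding eventually_nhds_metric
  proof (intro exI[of _ "\<tau> / 4 - norm t"] conjI allI impI)
    fix u :: real
    assume "dist u 0 < \<tau> / 4 - norm t"
    then have "norm t + norm (u *\<^sub>R axis j (1::real)) \<le> \<tau> / 4"
      by simp
    then have "norm (t + u *\<^sub>R axis j 1) \<le> \<tau> / 4"
      using norm_triangle_ineq[of t "u *\<^sub>R axis j 1"] by linarith
    then show "partialD i (laplaceRV M X) (t + u *\<^sub>R axis j 1)
        = (\<integral>\<omega>. X i \<omega> * exp (innerRV X (t + u *\<^sub>R axis j 1) \<omega>) \<partial>M)"
      by (rule partialD_laplaceRV)
  qed (use assms in simp)
  moreover have "((\<lambda>u. \<integral>\<omega>. X i \<omega> * exp (innerRV X (t + u *\<^sub>R axis j 1) \<omega>) \<partial>M) has_real_derivative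
      (\<integral>\<omega>. X i \<omega> * X j \<omega> * exp (innerRV X t \<omega>) \<partial>M)) (at 0)"
    using assms
    by (intro has_derivative_axis_integral_exp_innerRV) (auto intro: order_trans[OF abs_le_l1_normRV])
  ultimately show ?thesis
    by (subst DERIV_cong_ev[OF refl _ refl]) auto
qed

lemma partialD_partialD_laplaceRV:
  "norm t < \<tau> / 4 \<Longrightarrow>
    partialD j (partialD i (laplaceRV M X)) t = (\<integral>\<omega>. X i \<omega> * X j \<omega> * exp (innerRV X t \<omega>) \<partial>M)"
  unfolding partialD_def[of j] by (rule DERIV_imp_deriv[OF partialD_laplaceRV_has_axis_derivative])

lemma abs_second_moment_exp_diff_le:
  assumes "norm x \<le> \<tau> / 4" "norm y \<le> \<tau> / 4"
  shows "\<bar>X i \<omega> * X j \<omega> * exp (innerRV X x \<omega>) - X i \<omega> * X j \<omega> * exp (innerRV X y \<omega>)\<bar>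
    \<le> dist x y * (2 * dominating \<omega>)"
proof -
  let ?S = "l1_normRV X \<omega>"
  have S: "0 \<le> ?S"
    by (rule l1_normRV_nonneg)
  have exp_le: "exp (innerRV X t \<omega>) \<le> exp (\<tau> / 2 * ?S)" if "norm t \<le> \<tau> / 4" for t
  proof -
    have "innerRV X t \<omega> \<le> \<tau> / 2 * ?S"
      using innerRV_le[OF that, of X \<omega>] mult_nonneg_nonneg[OF less_imp_le[OF \<tau>_pos] S] by linarith
    then show ?thesis
      by simp
  qed
  have "\<bar>X i \<omega> * X j \<omega> * exp (innerRV X x \<omega>) - X i \<omega> * X j \<omega> * exp (innerRV X y \<omega>)\<bar>
      = \<bar>X i \<omega> * X j \<omega>\<bar> * \<bar>exp (innerRV X x \<omega>) - exp (innerRV X y \<omega>)\<bar>"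
    by (simp add: abs_mult[symmetric] right_diff_distrib)
  also have "\<dots> \<le> (?S * ?S) * (\<bar>innerRV X x \<omega> - innerRV X y \<omega>\<bar> * (exp (innerRV X x \<omega>) + exp (innerRV X y \<omega>)))"
    using abs_mult_X_le by (intro mult_mono abs_exp_diff_le) auto
  also have "\<dots> \<le> (?S * ?S) * ((dist x y * ?S) * (2 * exp (\<tau> / 2 * ?S)))"
  proof -
    have "exp (innerRV X x \<omega>) + exp (innerRV X y \<omega>) \<le> 2 * exp (\<tau> / 2 * ?S)"
      using exp_le[OF assms(1)] exp_le[OF assms(2)] by linarith
    then show ?thesis
      using abs_innerRV_le[of X "x - y" \<omega>] S
      by (intro mult_left_mono mult_mono) (auto simp: innerRV_diff dist_norm)
  qed
  also have "\<dots> = dist x y * (2 * (?S ^ 3 * exp (\<tau> / 2 * ?S)))"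
    by (simp add: power3_eq_cube algebra_simps)
  also have "\<dots> \<le> dist x y * (2 * dominating \<omega>)"
  proof -
    have "?S ^ 3 * exp (\<tau> / 2 * ?S) \<le> (1 + ?S) ^ 3 * exp (\<tau> / 2 * ?S)"
      using S by (intro mult_right_mono power_mono) auto
    also have "\<dots> \<le> dominating \<omega>"
      by (rule cube_exp_le_dominating)
    finally show ?thesis
      by (auto intro!: mult_left_mono)
  qed
  finally show ?thesis .
qed

lemma lipschitz_on_second_moment:
  "(2 * integral\<^sup>L M dominating)-lipschitz_on (ball 0 (\<tau> / 4))
     (\<lambda>t. \<integral>\<omega>. X i \<omega> * X j \<omega> * exp (innerRV X t \<omega>) \<partial>M)"
proof (rule lipschitz_onI)
  show "0 \<le> 2 * integral\<^sup>L M dominating"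
    unfolding dominating_def using \<tau>_pos by (simp add: integral_nonneg_AE)
  fix x y :: "real^'d"
  assume "x \<in> ball 0 (\<tau> / 4)" "y \<in> ball 0 (\<tau> / 4)"
  then have xy: "norm x \<le> \<tau> / 4" "norm y \<le> \<tau> / 4"
    by auto
  let ?I = "\<lambda>t. \<integral>\<omega>. X i \<omega> * X j \<omega> * exp (innerRV X t \<omega>) \<partial>M"
  have int: "integrable M (\<lambda>\<omega>. X i \<omega> * X j \<omega> * exp (innerRV X t \<omega>))" if "norm t \<le> \<tau> / 4" for t
    using that abs_mult_X_le_cube by (intro integrable_mult_exp_innerRV) auto
  have "dist (?I x) (?I y)
      = norm (\<integral>\<omega>. X i \<omega> * X j \<omega> * exp (innerRV X x \<omega>) - X i \<omega> * X j \<omega> * exp (innerRV X y \<omega>) \<partial>M)"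
    using int[OF xy(1)] int[OF xy(2)] by (simp add: dist_norm)
  also have "\<dots> \<le> (\<integral>\<omega>. dist x y * (2 * dominating \<omega>) \<partial>M)"
    using integrable_dominating abs_second_moment_exp_diff_le[OF xy]
    by (intro norm_integral_le_dominating) auto
  also have "\<dots> = 2 * integral\<^sup>L M dominating * dist x y"
    by simp
  finally show "dist (?I x) (?I y) \<le> 2 * integral\<^sup>L M dominating * dist x y" .
qed

theorem laplaceRV_twice_continuously_differentiable:
  "\<exists>V. open V \<and> (0::real^'d) \<in> V \<and>
    (\<forall>t\<in>V. integrable M (\<lambda>\<omega>. exp (\<Sum>i\<in>UNIV. t $ i * X i \<omega>))) \<and>
    (\<forall>t\<in>V. \<forall>i. has_partial_at i (laplaceRV M X) t) \<and>
    (\<forall>t\<in>V. \<forall>i j. has_partial_at j (partialD i (laplaceRV M X)) t) \<and>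
    (\<forall>i j. continuous_on V (partialD j (partialD i (laplaceRV M X))))"
proof (intro exI[of _ "ball 0 (\<tau> / 4)"] conjI ballI allI)
  show "open (ball (0::real^'d) (\<tau> / 4))" "(0::real^'d) \<in> ball 0 (\<tau> / 4)"
    using \<tau>_pos by auto
  fix t :: "real^'d"
  assume "t \<in> ball 0 (\<tau> / 4)"
  then have t: "norm t < \<tau> / 4"
    by simp
  then show "integrable M (\<lambda>\<omega>. exp (\<Sum>i\<in>UNIV. t $ i * X i \<omega>))"
    using integrable_mult_exp_innerRV[of "\<lambda>_. 1" t] l1_normRV_nonneg[of X]
    by (simp add: innerRV_def)
  show "has_partial_at i (laplaceRV M X) t" for i
    unfolding has_partial_at_def
    by (rule differentiableI, rule has_field_derivative_imp_has_derivative,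
        rule laplaceRV_has_axis_derivative) (use t in simp)
  show "has_partial_at j (partialD i (laplaceRV M X)) t" for i j
    unfolding has_partial_at_def
    by (rule differentiableI, rule has_field_derivative_imp_has_derivative,
        rule partialD_laplaceRV_has_axis_derivative[OF t])
next
  fix i j
  show "continuous_on (ball 0 (\<tau> / 4)) (partialD j (partialD i (laplaceRV M X)))"
  proof (rule continuous_on_cong[OF refl, THEN iffD2])
    show "continuous_on (ball 0 (\<tau> / 4)) (\<lambda>t. \<integral>\<omega>. X i \<omega> * X j \<omega> * exp (innerRV X t \<omega>) \<partial>M)"
      by (rule lipschitz_on_continuous_on[OF lipschitz_on_second_moment])
  qed (simp add: partialD_partialD_laplaceRV)
qed

end

theorem mainTheorem5:
  fixes M :: "'a measure" and X :: "'d::finite \<Rightarrow> 'a \<Rightarrow> real"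
  assumes "prob_space M"
    and "one_Meixner M X"
  shows "\<exists>V. open V \<and> (0::real^'d) \<in> V \<and>
    (\<forall>t\<in>V. integrable M (\<lambda>\<omega>. exp (\<Sum>i\<in>UNIV. t $ i * X i \<omega>))) \<and>
    (\<forall>t\<in>V. \<forall>i. has_partial_at i (laplaceRV M X) t) \<and>
    (\<forall>t\<in>V. \<forall>i j. has_partial_at j (partialD i (laplaceRV M X)) t) \<and>
    (\<forall>i j. continuous_on V (partialD j (partialD i (laplaceRV M X))))"
proof -
  obtain \<alpha> \<beta> where "finite_moments M X" and commutator: "\<forall>i j. \<forall>f\<in>polyRV X.
      AE \<omega> in M. Uop M X i (mulX X j f) \<omega> - complex_of_real (X j \<omega>) * Uop M X i f \<omega>
        = (\<Sum>k\<in>UNIV. complex_of_real (\<alpha> i j k) * complex_of_real (X k \<omega>) * f \<omega>)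
          + complex_of_real (\<beta> i j) * f \<omega>"
    using assms(2) unfolding one_Meixner_def by blast
  then interpret diagonal_Meixner M X "\<lambda>i k. \<alpha> i i k" "\<lambda>i. \<beta> i i"
    using assms(1)
    by (simp add: diagonal_Meixner_def diagonal_Meixner_axioms_def
        finite_moment_vector_def finite_moment_vector_axioms_def)
  obtain \<tau> where "0 < \<tau>" "integrable M (\<lambda>\<omega>. exp (\<tau> * l1_normRV X \<omega>))"
    using exists_integrable_exp_l1_normRV by blast
  then interpret exponential_moment M X \<tau>
    by unfold_locales simp_all
  show ?thesis
    by (rule laplaceRV_twice_continuously_differentiable)
qed

end
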